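(* There is a metric on $\mathcal{I}_\alpha$ that generates the same topology as $d_\alpha$, and with respect to which $\mathcal{I}_\alpha$ is isometric to a subset of a compact metric space.
   Context: Fix $\alpha\in(0,1)$. An interval partition is a set $\beta$ of disjoint open subintervals (blocks) of some interval $[0,L]$ that cover $[0,L]$ up to a Lebesgue-null set; write $\|\beta\|:=L$ and $\mathrm{Leb}(U)$ for the length of a block $U$. $\beta$ has the $\alpha$-diversity property if for every $t\in[0,\|\beta\|]$ the limit $\mathscr{D}_\beta(t):=\Gamma(1-\alpha)\lim_{h\downarrow0}h^\alpha\#\{(a,b)\in\beta\colon b-a>h,\ b\le t\}$ exists; $\mathcal{I}_\alpha$ is the set of such partitions. For $U\in\beta$, $\mathscr{D}_\beta(U):=\mathscr{D}_\beta(t)$ for $t\in U$; $\mathscr{D}_\beta(\infty):=\mathscr{D}_\beta(\|\beta\|)$. A correspondence between $\beta,\gamma\in\mathcal{I}_\alpha$ is a finite sequence $(U_j,V_j)_{j\in[n]}$, $n\ge0$, of pairs in $\beta\times\gamma$ with $(U_j)_j$ and $(V_j)_j$ each strictly increasing in left-to-right order. Its $\alpha$-distortion is the maximum of $\sum_{j}|\mathrm{Leb}(U_j)-\mathrm{Leb}(V_j)|+\|\beta\|-\sum_j\mathrm{Leb}(U_j)$, $\sum_{j}|\mathrm{Leb}(U_j)-\mathrm{Leb}(V_j)|+\|\gamma\|-\sum_j\mathrm{Leb}(V_j)$, $\sup_j|\mathscr{D}_\beta(U_j)-\mathscr{D}_\gamma(V_j)|$ and $|\mathscr{D}_\beta(\infty)-\mathscr{D}_\gamma(\infty)|$.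 $d_\alpha(\beta,\gamma)$ is the infimum of the $\alpha$-distortion over all correspondences. *)

theory Defs
  imports "HOL-Analysis.Analysis"
begin

text \<open>An interval partition is represented by its set of blocks; a block (a,b) stands
  for the open interval from a to b (with a < b).\<close>

type_synonym ipart = "(real \<times> real) set"

definition block :: "real \<times> real \<Rightarrow> real set" where
  "block U = {fst U<..<snd U}"

definition Leb :: "real \<times> real \<Rightarrow> real" where
  "Leb U = snd U - fst U"

definition is_IP :: "real \<Rightarrow> ipart \<Rightarrow> bool" where
  "is_IP L \<beta> \<longleftrightarrow> 0 \<le> L \<and>
     (\<forall>U\<in>\<beta>. 0 \<le> fst U \<and> fst U < snd U \<and> snd U \<le> L) \<and>
     pairwise (\<lambda>U V. block U \<inter> block V = {}) \<beta> \<and>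
     {0..L} - (\<Union>U\<in>\<beta>. block U) \<in> null_sets lborel"

definition IP :: "ipart set" where
  "IP = {\<beta>. \<exists>L. is_IP L \<beta>}"

text \<open>The total mass; for an interval partition of [0,L] this equals L.\<close>
definition IPnorm :: "ipart \<Rightarrow> real" where
  "IPnorm \<beta> = Sup (insert 0 (snd ` \<beta>))"

definition div_count :: "ipart \<Rightarrow> real \<Rightarrow> real \<Rightarrow> nat" where
  "div_count \<beta> t h = card {U\<in>\<beta>. Leb U > h \<and> snd U \<le> t}"

definition has_diversity :: "real \<Rightarrow> ipart \<Rightarrow> bool" where
  "has_diversity \<alpha> \<beta> \<longleftrightarrow>
     (\<forall>t\<in>{0..IPnorm \<beta>}. \<exists>l. ((\<lambda>h. h powr \<alpha> * real (div_count \<beta> t h)) \<longlongrightarrow> l) (at_right 0))"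

definition I_alpha :: "real \<Rightarrow> ipart set" where
  "I_alpha \<alpha> = {\<beta>\<in>IP. has_diversity \<alpha> \<beta>}"

definition diversity :: "real \<Rightarrow> ipart \<Rightarrow> real \<Rightarrow> real" where
  "diversity \<alpha> \<beta> t = Gamma (1 - \<alpha>) * Lim (at_right 0) (\<lambda>h. h powr \<alpha> * real (div_count \<beta> t h))"

text \<open>Diversity of a block: value at any point of the block (we use the midpoint).\<close>
definition block_div :: "real \<Rightarrow> ipart \<Rightarrow> real \<times> real \<Rightarrow> real" where
  "block_div \<alpha> \<beta> U = diversity \<alpha> \<beta> ((fst U + snd U) / 2)"

definition total_div :: "real \<Rightarrow> ipart \<Rightarrow> real" where
  "total_div \<alpha> \<beta> = diversity \<alpha> \<beta> (IPnorm \<beta>)"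

definition correspondence :: "ipart \<Rightarrow> ipart \<Rightarrow> ((real \<times> real) \<times> (real \<times> real)) list \<Rightarrow> bool" where
  "correspondence \<beta> \<gamma> c \<longleftrightarrow>
     (\<forall>p\<in>set c. fst p \<in> \<beta> \<and> snd p \<in> \<gamma>) \<and>
     sorted_wrt (\<lambda>p q. snd (fst p) \<le> fst (fst q)) c \<and>
     sorted_wrt (\<lambda>p q. snd (snd p) \<le> fst (snd q)) c"

definition distortion :: "real \<Rightarrow> ipart \<Rightarrow> ipart \<Rightarrow> ((real \<times> real) \<times> (real \<times> real)) list \<Rightarrow> real" where
  "distortion \<alpha> \<beta> \<gamma> c =
     (let S = (\<Sum>p\<leftarrow>c. \<bar>Leb (fst p) - Leb (snd p)\<bar>) in
      Max {S + IPnorm \<beta> - (\<Sum>p\<leftarrow>c. Leb (fst p)),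
           S + IPnorm \<gamma> - (\<Sum>p\<leftarrow>c. Leb (snd p)),
           Sup (insert 0 ((\<lambda>p. \<bar>block_div \<alpha> \<beta> (fst p) - block_div \<alpha> \<gamma> (snd p)\<bar>) ` set c)),
           \<bar>total_div \<alpha> \<beta> - total_div \<alpha> \<gamma>\<bar>})"

definition d_alpha :: "real \<Rightarrow> ipart \<Rightarrow> ipart \<Rightarrow> real" where
  "d_alpha \<alpha> \<beta> \<gamma> = Inf (distortion \<alpha> \<beta> \<gamma> ` {c. correspondence \<beta> \<gamma> c})"

end

theory Submission
  imports Defs
begin

(* A correspondence is the same as a finite set of block pairs that is order preserving in both
   coordinates (a matching), and its distortion only depends on that set. Matchings compose, which
   gives the triangle inequality. A matching of small distortion must pair every long block with a
   block of nearly the same position and length, so distance zero forces equal partitions.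
   For separability, enumerate the blocks of each partition: if the endpoints and diversities of
   finitely many enumerated blocks of gamma are close to those of beta, the induced matching shows
   that gamma is d_alpha-close to beta. Hence I_alpha inherits a countable dense subset from the
   separable space of such feature sequences. Finally, for a dense sequence (z_k) of a separable
   metric space, x |-> (min (d x z_k) 1)_k is a topological embedding into the compact Hilbert cube
   [0,1]^N, and pulling back its metric gives the required equivalent metric. *)

section \<open>Separable metric spaces and the Hilbert cube\<close>

lemma dist_fun_ge_coordinate:
  fixes u v :: "'a::countable \<Rightarrow> 'b::metric_space"
  shows "(1/2) ^ to_nat i * min (dist (u i) (v i)) 1 \<le> dist u v"
proof -
  have "summable (\<lambda>n. (1/2::real) ^ n * min (dist (u (from_nat n)) (v (from_nat n))) 1)"
    by (rule summable_comparison_test'[of "\<lambda>n. (1/2) ^ n"]) (auto simp: summable_geometric_iff)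
  from sum_le_suminf[OF this, of "{to_nat i}"] show ?thesis
    unfolding dist_fun_def by simp
qed

lemma dist_fun_le_twice_bound:
  fixes u v :: "'a::countable \<Rightarrow> 'b::metric_space"
  assumes "\<And>i. dist (u i) (v i) \<le> c"
  shows "dist u v \<le> 2 * c"
proof -
  have geom: "summable (\<lambda>n. (1/2::real) ^ n)" by (simp add: summable_geometric_iff)
  have "dist u v \<le> (\<Sum>n. (1/2) ^ n * c)"
    unfolding dist_fun_def
  proof (rule suminf_le)
    show "summable (\<lambda>n. (1/2::real) ^ n * min (dist (u (from_nat n)) (v (from_nat n))) 1)"
      by (rule summable_comparison_test'[of "\<lambda>n. (1/2) ^ n"]) (auto simp: summable_geometric_iff)
  qed (use assms geom in \<open>auto intro: mult_left_mono min.coboundedI1 summable_mult2\<close>)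
  also have "\<dots> = 2 * c"
    using suminf_mult2[OF geom, of c] suminf_geometric[of "1/2::real"] by simp
  finally show ?thesis .
qed

lemma Metric_space_mtopology_eqI:
  assumes M: "Metric_space M d" and M': "Metric_space M d'"
    and d_d': "\<And>x \<epsilon>. x \<in> M \<Longrightarrow> \<epsilon> > 0 \<Longrightarrow> \<exists>\<delta>>0. \<forall>y. y \<in> M \<and> d x y < \<delta> \<longrightarrow> d' x y < \<epsilon>"
    and d'_d: "\<And>x \<epsilon>. x \<in> M \<Longrightarrow> \<epsilon> > 0 \<Longrightarrow> \<exists>\<delta>>0. \<forall>y. y \<in> M \<and> d' x y < \<delta> \<longrightarrow> d x y < \<epsilon>"
  shows "Metric_space.mtopology M d = Metric_space.mtopology M d'"
proof -
  have "continuous_map (Metric_space.mtopology M d) (Metric_space.mtopology M d') id"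
    using d_d' by (simp add: Metric_space.metric_continuous_map[OF M M'])
  moreover have "continuous_map (Metric_space.mtopology M d') (Metric_space.mtopology M d) id"
    using d'_d by (simp add: Metric_space.metric_continuous_map[OF M' M])
  ultimately show ?thesis
    using homeomorphic_maps_id homeomorphic_maps_def by (metis id_apply)
qed

lemma countable_dense_subset_if_feature_map:
  fixes \<phi> :: "'a \<Rightarrow> 'b::{metric_space, second_countable_topology}"
  assumes finer: "\<And>x \<epsilon>. x \<in> M \<Longrightarrow> \<epsilon> > 0 \<Longrightarrow> \<exists>\<eta>>0. \<forall>y\<in>M. dist (\<phi> x) (\<phi> y) < \<eta> \<longrightarrow> m x y < \<epsilon>"
  shows "\<exists>D. countable D \<and> D \<subseteq> M \<and> (\<forall>x\<in>M. \<forall>\<epsilon>>0. \<exists>y\<in>D. m x y < \<epsilon>)"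
proof -
  obtain T where T: "countable T" "T \<subseteq> \<phi> ` M" "\<phi> ` M \<subseteq> closure T"
    using separable by blast
  define D where "D = inv_into M \<phi> ` T"
  have "\<exists>y\<in>D. m x y < \<epsilon>" if x: "x \<in> M" and \<epsilon>: "\<epsilon> > 0" for x \<epsilon>
  proof -
    obtain \<eta> where \<eta>: "\<eta> > 0" "\<forall>y\<in>M. dist (\<phi> x) (\<phi> y) < \<eta> \<longrightarrow> m x y < \<epsilon>"
      using finer[OF x \<epsilon>] by blast
    obtain t where t: "t \<in> T" "dist t (\<phi> x) < \<eta>"
      using T(3) x \<eta>(1) closure_approachable by blast
    have "inv_into M \<phi> t \<in> M" "\<phi> (inv_into M \<phi> t) = t"
      using T(2) t(1) by (auto intro: inv_into_into f_inv_into_f)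
    then show ?thesis
      using \<eta>(2) t unfolding D_def by (metis dist_commute image_eqI)
  qed
  moreover have "D \<subseteq> M" using T(2) unfolding D_def by (auto intro: inv_into_into)
  ultimately show ?thesis using T(1) unfolding D_def by blast
qed

lemma Hilbert_cube_compact:
  defines "K \<equiv> Pi\<^sub>E UNIV (\<lambda>_::nat. {0..1::real})"
  shows "Metric_space K dist" and "compact_space (Metric_space.mtopology K dist)"
proof -
  show "Metric_space K dist" by (rule Met_TC.subspace) simp
  interpret Submetric UNIV dist K
    by (simp add: Submetric_axioms_def Submetric_def Met_TC.Metric_space_axioms)
  have "compactin (product_topology (\<lambda>_. euclidean) UNIV) K"
    unfolding K_def by (subst compactin_PiE) auto
  then have "compact K" by (simp add: euclidean_product_topology)
  then show "compact_space (Metric_space.mtopology K dist)"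
    using mtopology_submetric compact_space_subtopology compactin_mtopology_eq_compact by metis
qed

definition cube_embedding :: "('a \<Rightarrow> 'a \<Rightarrow> real) \<Rightarrow> (nat \<Rightarrow> 'a) \<Rightarrow> 'a \<Rightarrow> nat \<Rightarrow> real" where
  "cube_embedding m z x = (\<lambda>k. min (m x (z k)) 1)"

lemma (in Metric_space) dist_cube_embedding_le:
  assumes "x \<in> M" "y \<in> M" "range z \<subseteq> M"
  shows "dist (cube_embedding d z x) (cube_embedding d z y) \<le> 2 * d x y"
proof (rule dist_fun_le_twice_bound)
  fix k
  have "z k \<in> M" using assms(3) by blast
  then have "\<bar>d x (z k) - d y (z k)\<bar> \<le> d x y"
    using triangle[of x y "z k"] triangle[of y x "z k"] commute[of x y] assms(1,2) by force
  then show "dist (cube_embedding d z x k) (cube_embedding d z y k) \<le> d x y"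
    unfolding cube_embedding_def dist_real_def by linarith
qed

lemma (in Metric_space) cube_embedding_inverse_continuous:
  assumes dense: "\<And>\<epsilon>. \<epsilon> > 0 \<Longrightarrow> \<exists>k. d x (z k) < \<epsilon>" and "range z \<subseteq> M"
    and x: "x \<in> M" and \<epsilon>: "\<epsilon> > 0"
  shows "\<exists>\<delta>>0. \<forall>y. y \<in> M \<and> dist (cube_embedding d z x) (cube_embedding d z y) < \<delta> \<longrightarrow> d x y < \<epsilon>"
proof -
  define \<epsilon>' where "\<epsilon>' = min \<epsilon> 1"
  have \<epsilon>': "0 < \<epsilon>'" "\<epsilon>' \<le> \<epsilon>" "\<epsilon>' \<le> 1" using \<epsilon> unfolding \<epsilon>'_def by auto
  obtain k where k: "d x (z k) < \<epsilon>'/3" using dense[of "\<epsilon>'/3"] \<epsilon>' by auto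
  have "z k \<in> M" using assms(2) by blast
  have "d x y < \<epsilon>"
    if y: "y \<in> M" and dxy: "dist (cube_embedding d z x) (cube_embedding d z y) < (1/2) ^ to_nat k * (\<epsilon>'/3)" for y
  proof -
    have "(1/2) ^ to_nat k * min (dist (cube_embedding d z x k) (cube_embedding d z y k)) 1
        < (1/2) ^ to_nat k * (\<epsilon>'/3)"
      using dist_fun_ge_coordinate[of k "cube_embedding d z x" "cube_embedding d z y"] dxy by linarith
    then have "dist (cube_embedding d z x k) (cube_embedding d z y k) < \<epsilon>'/3" using \<epsilon>' by simp
    then have "d y (z k) < 2 * \<epsilon>'/3"
      using k \<epsilon>' unfolding cube_embedding_def dist_real_def by (auto simp: min_def abs_if split: if_splits)
    then show ?thesis
      using triangle[of x "z k" y] commute[of y "z k"] \<open>z k \<in> M\<close> x y k \<epsilon>' by linarith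
  qed
  then show ?thesis using \<epsilon>' by (intro exI[of _ "(1/2) ^ to_nat k * (\<epsilon>'/3)"]) auto
qed

lemma (in Metric_space) cube_embedding_equivalent_metric:
  assumes dense: "\<And>x \<epsilon>. x \<in> M \<Longrightarrow> \<epsilon> > 0 \<Longrightarrow> \<exists>k. d x (z k) < \<epsilon>" and z: "range z \<subseteq> M"
  defines "d' \<equiv> \<lambda>x y. dist (cube_embedding d z x) (cube_embedding d z y)"
  shows "Metric_space M d'" and "Metric_space.mtopology M d' = mtopology"
proof -
  have near: "\<exists>\<delta>>0. \<forall>y. y \<in> M \<and> d' x y < \<delta> \<longrightarrow> d x y < \<epsilon>" if "x \<in> M" "\<epsilon> > 0" for x \<epsilon>
    unfolding d'_def using cube_embedding_inverse_continuous[OF dense[OF that(1)] z that] .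
  show "Metric_space M d'"
  proof
    show "d' x y = 0 \<longleftrightarrow> x = y" if "x \<in> M" "y \<in> M" for x y
    proof
      assume "d' x y = 0"
      then have "d x y < \<epsilon>" if "\<epsilon> > 0" for \<epsilon>
        using near[of x \<epsilon>] \<open>x \<in> M\<close> \<open>y \<in> M\<close> that by auto
      then show "x = y" using \<open>x \<in> M\<close> \<open>y \<in> M\<close> by (meson mdist_pos_less not_less_iff_gr_or_eq)
    qed (simp add: d'_def)
  qed (auto simp: d'_def dist_commute dist_triangle)
  then show "Metric_space.mtopology M d' = mtopology"
  proof (rule Metric_space_mtopology_eqI[OF _ Metric_space_axioms near])
    show "\<exists>\<delta>>0. \<forall>y. y \<in> M \<and> d x y < \<delta> \<longrightarrow> d' x y < \<epsilon>" if "x \<in> M" "\<epsilon> > 0" for x \<epsilon>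
    proof (intro exI[of _ "\<epsilon>/2"] conjI allI impI)
      fix y assume "y \<in> M \<and> d x y < \<epsilon>/2"
      then show "d' x y < \<epsilon>" using dist_cube_embedding_le[OF \<open>x \<in> M\<close> _ z] unfolding d'_def by force
    qed (use that in simp)
  qed
qed

lemma separable_metric_embeds_in_Hilbert_cube:
  assumes "Metric_space M m"
    and D: "countable D" "D \<subseteq> M" "\<And>x \<epsilon>. x \<in> M \<Longrightarrow> \<epsilon> > 0 \<Longrightarrow> \<exists>y\<in>D. m x y < \<epsilon>"
  shows "\<exists>d. Metric_space M d \<and>
             Metric_space.mtopology M d = Metric_space.mtopology M m \<and>
             (\<exists>(K :: (nat \<Rightarrow> real) set) dK f.
                 Metric_space K dK \<and> compact_space (Metric_space.mtopology K dK) \<and>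
                 f ` M \<subseteq> K \<and>
                 (\<forall>x\<in>M. \<forall>y\<in>M. dK (f x) (f y) = d x y))"
proof (cases "M = {}")
  case True
  then show ?thesis using assms(1) Hilbert_cube_compact by blast
next
  case False
  interpret Metric_space M m by fact
  define z where "z = from_nat_into D"
  have "D \<noteq> {}" using False D(3)[of _ 1] by fastforce
  then have "range z \<subseteq> M" unfolding z_def using from_nat_into[of D] D(2) by blast
  moreover have "\<exists>k. m x (z k) < \<epsilon>" if "x \<in> M" "\<epsilon> > 0" for x \<epsilon>
    using D(3)[OF that] from_nat_into_surj[OF D(1)] unfolding z_def by metis
  moreover have "cube_embedding m z ` M \<subseteq> Pi\<^sub>E UNIV (\<lambda>_. {0..1})"
    unfolding cube_embedding_def by auto
  ultimately show ?thesis
    using cube_embedding_equivalent_metric Hilbert_cube_compact by blast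
qed

section \<open>Blocks of interval partitions\<close>

definition left_of :: "real \<times> real \<Rightarrow> real \<times> real \<Rightarrow> bool" where
  "left_of U V \<longleftrightarrow> snd U \<le> fst V"

lemma is_IP_blockD:
  assumes "is_IP L \<beta>" "U \<in> \<beta>"
  shows "0 \<le> fst U" "fst U < snd U" "snd U \<le> L"
  using assms unfolding is_IP_def by blast+

lemma is_IP_nonneg: "is_IP L \<beta> \<Longrightarrow> 0 \<le> L"
  unfolding is_IP_def by blast

lemma Leb_pos: "is_IP L \<beta> \<Longrightarrow> U \<in> \<beta> \<Longrightarrow> 0 < Leb U"
  using is_IP_blockD(2) unfolding Leb_def by fastforce

lemma is_IP_disjoint_family: "is_IP L \<beta> \<Longrightarrow> disjoint_family_on block \<beta>"
  unfolding is_IP_def pairwise_def disjoint_family_on_def by blast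

lemma not_left_of_self: "fst U < snd U \<Longrightarrow> \<not> left_of U U"
  unfolding left_of_def by simp

lemma left_of_asym: "fst U < snd U \<Longrightarrow> fst V < snd V \<Longrightarrow> left_of U V \<Longrightarrow> \<not> left_of V U"
  unfolding left_of_def by simp

lemma is_IP_left_of_cases:
  assumes "is_IP L \<beta>" "U \<in> \<beta>" "V \<in> \<beta>" "U \<noteq> V"
  shows "left_of U V \<or> left_of V U"
proof (rule ccontr)
  assume "\<not> ?thesis"
  then have "max (fst U) (fst V) < min (snd U) (snd V)"
    using is_IP_blockD(2)[OF assms(1)] assms(2,3) unfolding left_of_def by force
  then have "(max (fst U) (fst V) + min (snd U) (snd V)) / 2 \<in> block U \<inter> block V"
    unfolding block_def by auto
  then show False
    using is_IP_disjoint_family[OF assms(1)] assms(2-4) unfolding disjoint_family_on_def by blast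
qed

lemma block_in_sets_borel [simp]: "block U \<in> sets borel"
  unfolding block_def by simp

lemma emeasure_Union_blocks:
  assumes "is_IP L \<beta>" "finite F" "F \<subseteq> \<beta>"
  shows "emeasure lborel (\<Union>U\<in>F. block U) = ennreal (sum Leb F)"
proof -
  have "emeasure lborel (\<Union>U\<in>F. block U) = (\<Sum>U\<in>F. emeasure lborel (block U))"
    using disjoint_family_on_mono[OF assms(3) is_IP_disjoint_family[OF assms(1)]] assms(2)
    by (intro sum_emeasure[symmetric]) auto
  also have "\<dots> = (\<Sum>U\<in>F. ennreal (Leb U))"
  proof (rule sum.cong[OF refl])
    fix U assume "U \<in> F"
    then have "fst U < snd U" using is_IP_blockD(2)[OF assms(1)] assms(3) by blast
    then show "emeasure lborel (block U) = ennreal (Leb U)" by (simp add: block_def Leb_def)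
  qed
  also have "\<dots> = ennreal (sum Leb F)"
    using Leb_pos[OF assms(1)] assms(3) by (intro sum_ennreal) (auto intro: less_imp_le)
  finally show ?thesis .
qed

lemma sum_Leb_le_interval:
  assumes "is_IP L \<beta>" "finite F" "F \<subseteq> \<beta>" "a \<le> b"
    and "\<And>U. U \<in> F \<Longrightarrow> a \<le> fst U \<and> snd U \<le> b"
  shows "sum Leb F \<le> b - a"
proof -
  have "(\<Union>U\<in>F. block U) \<subseteq> {a..b}"
  proof
    fix x assume "x \<in> (\<Union>U\<in>F. block U)"
    then obtain U where "U \<in> F" "x \<in> block U" by blast
    with assms(5)[of U] show "x \<in> {a..b}" unfolding block_def by auto
  qed
  then have "ennreal (sum Leb F) \<le> emeasure lborel {a..b}"
    unfolding emeasure_Union_blocks[OF assms(1-3), symmetric] by (intro emeasure_mono) auto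
  then show ?thesis using assms(4) by simp
qed

lemma sum_Leb_le:
  assumes "is_IP L \<beta>" "finite F" "F \<subseteq> \<beta>"
  shows "sum Leb F \<le> L"
proof -
  have "sum Leb F \<le> L - 0"
    using is_IP_blockD(1,3)[OF assms(1)] assms(3)
    by (intro sum_Leb_le_interval[OF assms is_IP_nonneg[OF assms(1)]]) (meson subsetD)
  then show ?thesis by simp
qed

lemma sum_Leb_disjoint_le:
  assumes "is_IP L \<beta>" "finite F" "finite G" "F \<subseteq> \<beta>" "G \<subseteq> \<beta>" "F \<inter> G = {}"
  shows "sum Leb F + sum Leb G \<le> L"
  using sum_Leb_le[OF assms(1), of "F \<union> G"] assms(2-6) by (simp add: sum.union_disjoint)

lemma finite_long_blocks:
  assumes "is_IP L \<beta>" "h > 0"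
  shows "finite {U \<in> \<beta>. Leb U > h}"
proof (rule finite_if_finite_subsets_card_bdd[THEN conjunct1])
  fix G assume G: "G \<subseteq> {U \<in> \<beta>. Leb U > h}" "finite G"
  have "real (card G) * h = (\<Sum>U\<in>G. h)" by simp
  also have "\<dots> \<le> sum Leb G" using G by (intro sum_mono) auto
  also have "\<dots> \<le> L" using sum_Leb_le[OF assms(1) G(2)] G(1) by auto
  finally have "real (card G) \<le> L / h" using assms(2) by (simp add: field_simps)
  then show "card G \<le> nat \<lceil>L / h\<rceil>" by linarith
qed

lemma countable_blocks:
  assumes "is_IP L \<beta>"
  shows "countable \<beta>"
proof -
  have eq: "\<beta> = (\<Union>n. {U \<in> \<beta>. Leb U > 1 / Suc n})"
  proof (intro equalityI subsetI)
    fix U assume "U \<in> \<beta>"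
    then obtain n where "1 / Suc n < Leb U" using Leb_pos[OF assms] nat_approx_posE by blast
    then show "U \<in> (\<Union>n. {U \<in> \<beta>. Leb U > 1 / Suc n})" using \<open>U \<in> \<beta>\<close> by blast
  qed auto
  have "countable {U \<in> \<beta>. Leb U > 1 / Suc n}" for n
    using finite_long_blocks[OF assms, of "1 / Suc n"] by (simp add: countable_finite)
  then have "countable (\<Union>n. {U \<in> \<beta>. Leb U > 1 / Suc n})"
    by (intro countable_UN[OF countableI_type])
  with eq show ?thesis by simp
qed

lemma emeasure_countable_Union_le:
  assumes "countable I" "\<And>i. i \<in> I \<Longrightarrow> A i \<in> sets M"
    and "\<And>F. finite F \<Longrightarrow> F \<subseteq> I \<Longrightarrow> emeasure M (\<Union>i\<in>F. A i) \<le> c"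
  shows "emeasure M (\<Union>i\<in>I. A i) \<le> c"
proof (cases "I = {}")
  case True
  then show ?thesis using assms(3)[of "{}"] by simp
next
  case False
  define g where "g = from_nat_into I"
  define B where "B n = (\<Union>i\<in>g ` {..<n}. A i)" for n
  have range_g: "range g = I" unfolding g_def using False assms(1) by simp
  have "(\<Union>n. B n) = (\<Union>i\<in>I. A i)"
    unfolding B_def range_g[symmetric] by (auto intro: lessI)
  moreover have "(SUP n. emeasure M (B n)) = emeasure M (\<Union>n. B n)"
  proof (rule SUP_emeasure_incseq)
    show "range B \<subseteq> sets M" unfolding B_def using assms(2) range_g by blast
    show "incseq B" unfolding B_def incseq_def by force
  qed
  moreover have "emeasure M (B n) \<le> c" for n
    unfolding B_def using assms(3)[of "g ` {..<n}"] range_g by blast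
  ultimately show ?thesis by (metis SUP_least)
qed

lemma sum_Leb_approx:
  assumes IP: "is_IP L \<beta>" and "\<epsilon> > 0"
  obtains F where "finite F" "F \<subseteq> \<beta>" "L - \<epsilon> < sum Leb F"
proof -
  have "\<exists>F. finite F \<and> F \<subseteq> \<beta> \<and> L - \<epsilon> < sum Leb F"
  proof (rule ccontr)
    assume "\<nexists>F. finite F \<and> F \<subseteq> \<beta> \<and> L - \<epsilon> < sum Leb F"
    then have small: "sum Leb F \<le> L - \<epsilon>" if "finite F" "F \<subseteq> \<beta>" for F
      using that by auto
    have upper: "emeasure lborel (\<Union>U\<in>\<beta>. block U) \<le> ennreal (L - \<epsilon>)"
    proof (rule emeasure_countable_Union_le[OF countable_blocks[OF IP]])
      fix F assume "finite F" "F \<subseteq> \<beta>"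
      then show "emeasure lborel (\<Union>U\<in>F. block U) \<le> ennreal (L - \<epsilon>)"
        using small by (simp add: emeasure_Union_blocks[OF IP] ennreal_leI)
    qed simp
    have lower: "ennreal L \<le> emeasure lborel (\<Union>U\<in>\<beta>. block U)"
    proof -
      have null: "{0..L} - (\<Union>U\<in>\<beta>. block U) \<in> null_sets lborel"
        using IP unfolding is_IP_def by blast
      have "open (\<Union>U\<in>\<beta>. block U)" unfolding block_def by auto
      then have "(\<Union>U\<in>\<beta>. block U) \<in> sets lborel" by simp
      have "emeasure lborel {0..L} \<le> emeasure lborel ((\<Union>U\<in>\<beta>. block U) \<union> ({0..L} - (\<Union>U\<in>\<beta>. block U)))"
        using null \<open>(\<Union>U\<in>\<beta>. block U) \<in> sets lborel\<close> by (intro emeasure_mono) auto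
      also have "\<dots> = emeasure lborel (\<Union>U\<in>\<beta>. block U)"
        by (rule emeasure_Un_null_set) fact+
      finally show ?thesis using is_IP_nonneg[OF IP] by simp
    qed
    have "ennreal L \<le> ennreal (L - \<epsilon>)" using lower upper by (rule order_trans)
    then have "L \<le> L - \<epsilon>" using small[of "{}"] by (simp add: ennreal_le_iff)
    then show False using \<open>\<epsilon> > 0\<close> by simp
  qed
  then show thesis using that by blast
qed

lemma IPnorm_eq:
  assumes IP: "is_IP L \<beta>"
  shows "IPnorm \<beta> = L"
proof -
  have bdd: "bdd_above (insert 0 (snd ` \<beta>))"
    using is_IP_blockD(3)[OF IP] is_IP_nonneg[OF IP] by (intro bdd_aboveI[of _ L]) auto
  have le: "IPnorm \<beta> \<le> L" unfolding IPnorm_def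
    using is_IP_blockD(3)[OF IP] is_IP_nonneg[OF IP] by (intro cSup_least) auto
  have snd_le: "snd U \<le> IPnorm \<beta>" if "U \<in> \<beta>" for U
    unfolding IPnorm_def using bdd that by (intro cSup_upper) auto
  have nonneg: "0 \<le> IPnorm \<beta>" unfolding IPnorm_def using bdd by (intro cSup_upper) auto
  have close: "L - \<epsilon> < IPnorm \<beta>" if \<epsilon>: "\<epsilon> > 0" for \<epsilon>
  proof -
    obtain F where F: "finite F" "F \<subseteq> \<beta>" "L - \<epsilon> < sum Leb F"
      using sum_Leb_approx[OF IP \<epsilon>] by blast
    have "sum Leb F \<le> IPnorm \<beta> - 0"
      using F(2) snd_le is_IP_blockD(1)[OF IP] nonneg
      by (intro sum_Leb_le_interval[OF IP F(1,2)]) auto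
    then show ?thesis using F(3) by simp
  qed
  have "L \<le> IPnorm \<beta>"
  proof (rule ccontr)
    assume "\<not> L \<le> IPnorm \<beta>"
    then show False using close[of "L - IPnorm \<beta>"] by linarith
  qed
  with le show ?thesis by simp
qed

lemma is_IP_IPnorm: "\<beta> \<in> IP \<Longrightarrow> is_IP (IPnorm \<beta>) \<beta>"
  unfolding IP_def using IPnorm_eq by auto

lemma sum_Leb_left_of_approx:
  assumes IP: "is_IP L \<beta>" and U: "U \<in> \<beta>" and "\<eta> > 0"
  obtains F where "finite F" "F \<subseteq> {V \<in> \<beta>. left_of V U}" "fst U - \<eta> < sum Leb F"
proof -
  obtain F0 where F0: "finite F0" "F0 \<subseteq> \<beta>" "L - \<eta> < sum Leb F0"
    using sum_Leb_approx[OF IP \<open>\<eta> > 0\<close>] by blast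
  define F where "F = {V \<in> F0. left_of V U}"
  have "sum Leb (F0 - F) \<le> L - fst U"
  proof (rule sum_Leb_le_interval[OF IP])
    fix V assume V: "V \<in> F0 - F"
    then have "V \<in> \<beta>" using F0(2) by blast
    have "V = U \<or> left_of U V"
      using is_IP_left_of_cases[OF IP \<open>V \<in> \<beta>\<close> U] V unfolding F_def by blast
    then have "fst U \<le> fst V"
      using is_IP_blockD(2)[OF IP U] unfolding left_of_def by auto
    then show "fst U \<le> fst V \<and> snd V \<le> L" using is_IP_blockD(3)[OF IP \<open>V \<in> \<beta>\<close>] by simp
  qed (use F0 is_IP_blockD[OF IP U] in auto)
  moreover have "sum Leb F0 = sum Leb (F0 - F) + sum Leb F"
    by (rule sum.subset_diff) (use F0(1) in \<open>auto simp: F_def\<close>)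
  ultimately have "fst U - \<eta> < sum Leb F" using F0(3) by linarith
  moreover have "finite F" "F \<subseteq> {V \<in> \<beta>. left_of V U}" using F0 unfolding F_def by auto
  ultimately show thesis using that by blast
qed

section \<open>Correspondences as matchings\<close>

type_synonym block_pairs = "((real \<times> real) \<times> (real \<times> real)) set"

definition matching :: "ipart \<Rightarrow> ipart \<Rightarrow> block_pairs \<Rightarrow> bool" where
  "matching \<beta> \<gamma> M \<longleftrightarrow> finite M \<and> M \<subseteq> \<beta> \<times> \<gamma> \<and>
     (\<forall>p\<in>M. \<forall>q\<in>M. p \<noteq> q \<longrightarrow>
        (left_of (fst p) (fst q) \<and> left_of (snd p) (snd q)) \<or>
        (left_of (fst q) (fst p) \<and> left_of (snd q) (snd p)))"

definition length_defect :: "block_pairs \<Rightarrow> real" where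
  "length_defect M = (\<Sum>p\<in>M. \<bar>Leb (fst p) - Leb (snd p)\<bar>)"

definition mass_defect :: "ipart \<Rightarrow> block_pairs \<Rightarrow> real" where
  "mass_defect \<beta> M = length_defect M + IPnorm \<beta> - (\<Sum>p\<in>M. Leb (fst p))"

definition diversity_defect :: "real \<Rightarrow> ipart \<Rightarrow> ipart \<Rightarrow> block_pairs \<Rightarrow> real" where
  "diversity_defect \<alpha> \<beta> \<gamma> M =
     Sup (insert 0 ((\<lambda>p. \<bar>block_div \<alpha> \<beta> (fst p) - block_div \<alpha> \<gamma> (snd p)\<bar>) ` M))"

definition matching_distortion :: "real \<Rightarrow> ipart \<Rightarrow> ipart \<Rightarrow> block_pairs \<Rightarrow> real" where
  "matching_distortion \<alpha> \<beta> \<gamma> M =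
     Max {mass_defect \<beta> M, mass_defect \<gamma> (converse M), diversity_defect \<alpha> \<beta> \<gamma> M,
          \<bar>total_div \<alpha> \<beta> - total_div \<alpha> \<gamma>\<bar>}"

lemma converse_eq_swap_image: "converse M = prod.swap ` M"
  by (rule set_eqI) (auto simp: image_iff intro: bexI[of _ "prod.swap _"])

lemma sum_converse: "(\<Sum>p\<in>converse M. f p) = (\<Sum>p\<in>M. f (prod.swap p))"
  by (simp add: converse_eq_swap_image sum.reindex)

lemma length_defect_converse [simp]: "length_defect (converse M) = length_defect M"
  unfolding length_defect_def sum_converse by (simp add: abs_minus_commute)

lemma matching_distortion_le_iff:
  "matching_distortion \<alpha> \<beta> \<gamma> M \<le> e \<longleftrightarrow>
     mass_defect \<beta> M \<le> e \<and> mass_defect \<gamma> (converse M) \<le> e \<and> diversity_defect \<alpha> \<beta> \<gamma> M \<le> e \<and>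
     \<bar>total_div \<alpha> \<beta> - total_div \<alpha> \<gamma>\<bar> \<le> e"
  unfolding matching_distortion_def by simp

lemma matching_distortion_less_iff:
  "matching_distortion \<alpha> \<beta> \<gamma> M < e \<longleftrightarrow>
     mass_defect \<beta> M < e \<and> mass_defect \<gamma> (converse M) < e \<and> diversity_defect \<alpha> \<beta> \<gamma> M < e \<and>
     \<bar>total_div \<alpha> \<beta> - total_div \<alpha> \<gamma>\<bar> < e"
  unfolding matching_distortion_def by simp

lemma matching_distortion_ge:
  "mass_defect \<beta> M \<le> matching_distortion \<alpha> \<beta> \<gamma> M"
  "mass_defect \<gamma> (converse M) \<le> matching_distortion \<alpha> \<beta> \<gamma> M"
  "diversity_defect \<alpha> \<beta> \<gamma> M \<le> matching_distortion \<alpha> \<beta> \<gamma> M"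
  "\<bar>total_div \<alpha> \<beta> - total_div \<alpha> \<gamma>\<bar> \<le> matching_distortion \<alpha> \<beta> \<gamma> M"
  using matching_distortion_le_iff[of \<alpha> \<beta> \<gamma> M "matching_distortion \<alpha> \<beta> \<gamma> M"] by simp_all

lemma matching_distortion_nonneg: "0 \<le> matching_distortion \<alpha> \<beta> \<gamma> M"
  using matching_distortion_ge(4)[of \<alpha> \<beta> \<gamma> M] by linarith

lemma diversity_defect_le_iff:
  "finite M \<Longrightarrow> diversity_defect \<alpha> \<beta> \<gamma> M \<le> e \<longleftrightarrow>
     0 \<le> e \<and> (\<forall>p\<in>M. \<bar>block_div \<alpha> \<beta> (fst p) - block_div \<alpha> \<gamma> (snd p)\<bar> \<le> e)"
  unfolding diversity_defect_def by (subst cSup_le_iff) auto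

lemma diversity_defect_ge:
  "finite M \<Longrightarrow> p \<in> M \<Longrightarrow> \<bar>block_div \<alpha> \<beta> (fst p) - block_div \<alpha> \<gamma> (snd p)\<bar> \<le> diversity_defect \<alpha> \<beta> \<gamma> M"
  unfolding diversity_defect_def by (intro cSup_upper) auto

lemma distortion_eq_matching_distortion:
  assumes "distinct c"
  shows "distortion \<alpha> \<beta> \<gamma> c = matching_distortion \<alpha> \<beta> \<gamma> (set c)"
  using assms
  unfolding distortion_def matching_distortion_def mass_defect_def diversity_defect_def
    length_defect_def Let_def
  by (simp add: sum_list_distinct_conv_sum_set sum_converse abs_minus_commute)

lemma matchingD:
  assumes "matching \<beta> \<gamma> M"
  shows "finite M" "M \<subseteq> \<beta> \<times> \<gamma>"
    and "p \<in> M \<Longrightarrow> q \<in> M \<Longrightarrow> p \<noteq> q \<Longrightarrow>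
      (left_of (fst p) (fst q) \<and> left_of (snd p) (snd q)) \<or>
      (left_of (fst q) (fst p) \<and> left_of (snd q) (snd p))"
  using assms unfolding matching_def by blast+

lemma matching_empty [simp]: "matching \<beta> \<gamma> {}"
  unfolding matching_def by simp

lemma matching_converse: "matching \<beta> \<gamma> M \<Longrightarrow> matching \<gamma> \<beta> (converse M)"
  unfolding matching_def by (auto simp: converse_eq_swap_image)

lemma matching_inj_fst:
  assumes "is_IP L \<beta>" "matching \<beta> \<gamma> M"
  shows "inj_on fst M"
proof (rule inj_onI, rule ccontr)
  fix p q assume pq: "p \<in> M" "q \<in> M" "fst p = fst q" "p \<noteq> q"
  have "fst p \<in> \<beta>" using matchingD(2)[OF assms(2)] pq(1) by auto
  then show False
    using matchingD(3)[OF assms(2) pq(1,2,4)] pq(3) not_left_of_self is_IP_blockD(2)[OF assms(1)] by metis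
qed

lemma matching_inj_snd:
  assumes "is_IP L \<gamma>" "matching \<beta> \<gamma> M"
  shows "inj_on snd M"
proof (rule inj_onI, rule ccontr)
  fix p q assume pq: "p \<in> M" "q \<in> M" "snd p = snd q" "p \<noteq> q"
  have "snd p \<in> \<gamma>" using matchingD(2)[OF assms(2)] pq(1) by auto
  then show False
    using matchingD(3)[OF assms(2) pq(1,2,4)] pq(3) not_left_of_self is_IP_blockD(2)[OF assms(1)] by metis
qed

lemma sorted_wrt_irrefl_distinct:
  "sorted_wrt R xs \<Longrightarrow> (\<And>x. x \<in> set xs \<Longrightarrow> \<not> R x x) \<Longrightarrow> distinct xs"
  by (induction xs) auto

lemma correspondence_imp_matching:
  assumes IP: "is_IP L \<beta>" and c: "correspondence \<beta> \<gamma> c"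
  shows "distinct c" "matching \<beta> \<gamma> (set c)"
proof -
  have sorted1: "sorted_wrt (\<lambda>p q. left_of (fst p) (fst q)) c"
    and sorted2: "sorted_wrt (\<lambda>p q. left_of (snd p) (snd q)) c"
    using c unfolding correspondence_def left_of_def by auto
  have sub: "set c \<subseteq> \<beta> \<times> \<gamma>" using c unfolding correspondence_def by (auto simp: mem_Times_iff)
  show "distinct c"
  proof (rule sorted_wrt_irrefl_distinct[OF sorted1])
    fix p assume "p \<in> set c"
    then have "fst p \<in> \<beta>" using sub by auto
    then show "\<not> left_of (fst p) (fst p)" using is_IP_blockD(2)[OF IP] not_left_of_self by blast
  qed
  have "(left_of (fst p) (fst q) \<and> left_of (snd p) (snd q)) \<or>
        (left_of (fst q) (fst p) \<and> left_of (snd q) (snd p))"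
    if pq: "p \<in> set c" "q \<in> set c" "p \<noteq> q" for p q
  proof -
    obtain i where i: "i < length c" "c ! i = p" using pq(1) by (meson in_set_conv_nth)
    obtain j where j: "j < length c" "c ! j = q" using pq(2) by (meson in_set_conv_nth)
    have "i \<noteq> j" using i j pq(3) by auto
    then consider "i < j" | "j < i" by linarith
    then show ?thesis
      by cases (use sorted1 sorted2 i j in \<open>auto simp: sorted_wrt_iff_nth_less\<close>)
  qed
  then show "matching \<beta> \<gamma> (set c)"
    unfolding matching_def using sub by auto
qed

lemma matching_imp_correspondence:
  assumes IP: "is_IP L \<beta>" and M: "matching \<beta> \<gamma> M"
  obtains c where "correspondence \<beta> \<gamma> c" "distinct c" "set c = M"
proof -
  define k where "k p = fst (fst p)" for p :: "(real \<times> real) \<times> (real \<times> real)"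
  have k_less: "k p < k q" if "p \<in> M" "q \<in> M" "left_of (fst p) (fst q)" for p q
  proof -
    have "fst p \<in> \<beta>" using matchingD(2)[OF M] that(1) by auto
    then have "fst (fst p) < snd (fst p)" by (rule is_IP_blockD(2)[OF IP])
    then show ?thesis using that(3) unfolding k_def left_of_def by linarith
  qed
  have ordered: "left_of (fst p) (fst q) \<and> left_of (snd p) (snd q)"
    if "p \<in> M" "q \<in> M" "k p < k q" for p q
  proof -
    have "p \<noteq> q" using that(3) by auto
    moreover have "\<not> left_of (fst q) (fst p)" using k_less[OF that(2,1)] that(3) by auto
    ultimately show ?thesis using matchingD(3)[OF M that(1,2)] by blast
  qed
  have inj: "inj_on k M"
  proof (rule inj_onI, rule ccontr)
    fix p q assume pq: "p \<in> M" "q \<in> M" "k p = k q" "p \<noteq> q"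
    then show False using matchingD(3)[OF M pq(1,2,4)] k_less[OF pq(1,2)] k_less[OF pq(2,1)] by auto
  qed
  define xs where "xs = sorted_list_of_set (k ` M)"
  have xs: "sorted_wrt (<) xs" "set xs = k ` M"
    unfolding xs_def using matchingD(1)[OF M] by simp_all
  define c where "c = map (the_inv_into M k) xs"
  have "map k c = xs" unfolding c_def map_map
    by (rule map_idI) (use xs(2) f_the_inv_into_f[OF inj] in auto)
  then have sorted_k: "sorted_wrt (\<lambda>p q. k p < k q) c"
    using xs(1) by (metis sorted_wrt_map)
  have "distinct c" using xs(1) \<open>map k c = xs\<close> strict_sorted_iff distinct_map by metis
  have set_c: "set c = M"
    unfolding c_def set_map xs(2) image_image using the_inv_into_f_f[OF inj] by simp
  have "sorted_wrt (\<lambda>p q. snd (fst p) \<le> fst (fst q)) c"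
    using ordered set_c by (intro sorted_wrt_mono_rel[OF _ sorted_k]) (auto simp: left_of_def)
  moreover have "sorted_wrt (\<lambda>p q. snd (snd p) \<le> fst (snd q)) c"
    using ordered set_c by (intro sorted_wrt_mono_rel[OF _ sorted_k]) (auto simp: left_of_def)
  moreover have "\<forall>p\<in>set c. fst p \<in> \<beta> \<and> snd p \<in> \<gamma>" using set_c matchingD(2)[OF M] by auto
  ultimately have "correspondence \<beta> \<gamma> c" unfolding correspondence_def by blast
  with \<open>distinct c\<close> set_c that show thesis by blast
qed

lemma d_alpha_eq_Inf_matching_distortion:
  assumes IP: "is_IP L \<beta>"
  shows "d_alpha \<alpha> \<beta> \<gamma> = Inf (matching_distortion \<alpha> \<beta> \<gamma> ` {M. matching \<beta> \<gamma> M})"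
proof -
  have "distortion \<alpha> \<beta> \<gamma> ` {c. correspondence \<beta> \<gamma> c} = matching_distortion \<alpha> \<beta> \<gamma> ` {M. matching \<beta> \<gamma> M}"
  proof (intro equalityI subsetI)
    fix x assume "x \<in> distortion \<alpha> \<beta> \<gamma> ` {c. correspondence \<beta> \<gamma> c}"
    then obtain c where c: "correspondence \<beta> \<gamma> c" "x = distortion \<alpha> \<beta> \<gamma> c" by blast
    then show "x \<in> matching_distortion \<alpha> \<beta> \<gamma> ` {M. matching \<beta> \<gamma> M}"
      using correspondence_imp_matching[OF IP c(1)] distortion_eq_matching_distortion by auto
  next
    fix x assume "x \<in> matching_distortion \<alpha> \<beta> \<gamma> ` {M. matching \<beta> \<gamma> M}"
    then obtain M where M: "matching \<beta> \<gamma> M" "x = matching_distortion \<alpha> \<beta> \<gamma> M" by blast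
    obtain c where c: "correspondence \<beta> \<gamma> c" "distinct c" "set c = M"
      using matching_imp_correspondence[OF IP M(1)] by blast
    then have "x = distortion \<alpha> \<beta> \<gamma> c"
      using M(2) distortion_eq_matching_distortion by simp
    with c(1) show "x \<in> distortion \<alpha> \<beta> \<gamma> ` {c. correspondence \<beta> \<gamma> c}" by blast
  qed
  then show ?thesis unfolding d_alpha_def by simp
qed

lemma d_alpha_le_matching_distortion:
  assumes "is_IP L \<beta>" "matching \<beta> \<gamma> M"
  shows "d_alpha \<alpha> \<beta> \<gamma> \<le> matching_distortion \<alpha> \<beta> \<gamma> M"
  unfolding d_alpha_eq_Inf_matching_distortion[OF assms(1)]
  by (rule cInf_lower) (use assms(2) matching_distortion_nonneg in \<open>auto intro: bdd_belowI[of _ 0]\<close>)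

lemma d_alpha_less_imp_matching:
  assumes "is_IP L \<beta>" "d_alpha \<alpha> \<beta> \<gamma> < e"
  obtains M where "matching \<beta> \<gamma> M" "matching_distortion \<alpha> \<beta> \<gamma> M < e"
proof -
  have "matching_distortion \<alpha> \<beta> \<gamma> ` {M. matching \<beta> \<gamma> M} \<noteq> {}"
    using matching_empty by blast
  moreover have "bdd_below (matching_distortion \<alpha> \<beta> \<gamma> ` {M. matching \<beta> \<gamma> M})"
    using matching_distortion_nonneg by (auto intro: bdd_belowI[of _ 0])
  ultimately have "\<exists>x\<in>matching_distortion \<alpha> \<beta> \<gamma> ` {M. matching \<beta> \<gamma> M}. x < e"
    using assms(2) unfolding d_alpha_eq_Inf_matching_distortion[OF assms(1)] by (simp add: cInf_less_iff)
  then show thesis using that by blast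
qed

lemma distortion_nonneg: "0 \<le> distortion \<alpha> \<beta> \<gamma> c"
proof -
  have "\<bar>total_div \<alpha> \<beta> - total_div \<alpha> \<gamma>\<bar> \<le> distortion \<alpha> \<beta> \<gamma> c"
    unfolding distortion_def Let_def by (intro Max_ge) auto
  then show ?thesis by linarith
qed

lemma d_alpha_nonneg: "0 \<le> d_alpha \<alpha> \<beta> \<gamma>"
proof -
  have "correspondence \<beta> \<gamma> []" unfolding correspondence_def by simp
  then show ?thesis
    unfolding d_alpha_def using distortion_nonneg by (intro cInf_greatest) auto
qed

lemma correspondence_swap:
  "correspondence \<beta> \<gamma> c \<Longrightarrow> correspondence \<gamma> \<beta> (map prod.swap c)"
  unfolding correspondence_def by (auto simp: sorted_wrt_map)

lemma distortion_swap: "distortion \<alpha> \<gamma> \<beta> (map prod.swap c) = distortion \<alpha> \<beta> \<gamma> c"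
proof -
  have "(\<Sum>p\<leftarrow>map prod.swap c. \<bar>Leb (fst p) - Leb (snd p)\<bar>) = (\<Sum>p\<leftarrow>c. \<bar>Leb (fst p) - Leb (snd p)\<bar>)"
    by (induction c) (auto simp: abs_minus_commute)
  moreover have "(\<lambda>p. \<bar>block_div \<alpha> \<gamma> (fst p) - block_div \<alpha> \<beta> (snd p)\<bar>) ` set (map prod.swap c)
      = (\<lambda>p. \<bar>block_div \<alpha> \<beta> (fst p) - block_div \<alpha> \<gamma> (snd p)\<bar>) ` set c"
    unfolding set_map image_image by (intro image_cong refl) (simp add: abs_minus_commute)
  moreover have "(\<Sum>p\<leftarrow>map prod.swap c. Leb (fst p)) = (\<Sum>p\<leftarrow>c. Leb (snd p))"
    "(\<Sum>p\<leftarrow>map prod.swap c. Leb (snd p)) = (\<Sum>p\<leftarrow>c. Leb (fst p))"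
    by (induction c) auto
  ultimately show ?thesis
    unfolding distortion_def Let_def by (simp add: abs_minus_commute insert_commute)
qed

lemma d_alpha_commute: "d_alpha \<alpha> \<beta> \<gamma> = d_alpha \<alpha> \<gamma> \<beta>"
proof -
  have "distortion \<alpha> \<beta> \<gamma> ` {c. correspondence \<beta> \<gamma> c} \<subseteq> distortion \<alpha> \<gamma> \<beta> ` {c. correspondence \<gamma> \<beta> c}"
    for \<beta> \<gamma>
    using correspondence_swap distortion_swap by (metis (mono_tags, lifting) image_eqI image_subsetI mem_Collect_eq)
  then show ?thesis unfolding d_alpha_def by (metis subset_antisym)
qed

section \<open>The metric axioms\<close>

lemma matching_graph:
  assumes IPb: "is_IP Lb \<beta>" and F: "finite F" "F \<subseteq> \<beta>" and g: "g ` F \<subseteq> \<gamma>"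
    and order: "\<And>U U'. U \<in> F \<Longrightarrow> U' \<in> F \<Longrightarrow> left_of U U' \<Longrightarrow> left_of (g U) (g U')"
  shows "matching \<beta> \<gamma> ((\<lambda>U. (U, g U)) ` F)"
  unfolding matching_def
proof (intro conjI ballI impI)
  fix p q assume "p \<in> (\<lambda>U. (U, g U)) ` F" "q \<in> (\<lambda>U. (U, g U)) ` F" "p \<noteq> q"
  then obtain U U' where UU': "U \<in> F" "U' \<in> F" "p = (U, g U)" "q = (U', g U')" "U \<noteq> U'"
    by blast
  then have "left_of U U' \<or> left_of U' U"
    using is_IP_left_of_cases[OF IPb] F(2) by blast
  then show "(left_of (fst p) (fst q) \<and> left_of (snd p) (snd q)) \<or>
      (left_of (fst q) (fst p) \<and> left_of (snd q) (snd p))"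
    using order[OF UU'(1,2)] order[OF UU'(2,1)] UU'(3,4) by auto
qed (use F g in auto)

lemma d_alpha_le_graph:
  assumes IPb: "is_IP Lb \<beta>" and F: "finite F" "F \<subseteq> \<beta>" and g: "g ` F \<subseteq> \<gamma>"
    and order: "\<And>U U'. U \<in> F \<Longrightarrow> U' \<in> F \<Longrightarrow> left_of U U' \<Longrightarrow> left_of (g U) (g U')"
    and close: "\<And>U. U \<in> F \<Longrightarrow> \<bar>fst U - fst (g U)\<bar> \<le> \<delta> \<and> \<bar>snd U - snd (g U)\<bar> \<le> \<delta> \<and>
                  \<bar>block_div \<alpha> \<beta> U - block_div \<alpha> \<gamma> (g U)\<bar> \<le> \<delta>"
    and norm: "\<bar>IPnorm \<beta> - IPnorm \<gamma>\<bar> \<le> \<delta>" and total: "\<bar>total_div \<alpha> \<beta> - total_div \<alpha> \<gamma>\<bar> \<le> \<delta>"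
  shows "d_alpha \<alpha> \<beta> \<gamma> \<le> Lb - sum Leb F + (4 * real (card F) + 1) * \<delta>"
proof -
  define M where "M = (\<lambda>U. (U, g U)) ` F"
  have M: "matching \<beta> \<gamma> M" unfolding M_def by (rule matching_graph[OF IPb F g order])
  have sum_M: "(\<Sum>p\<in>M. h p) = (\<Sum>U\<in>F. h (U, g U))" for h :: "_ \<Rightarrow> real"
    unfolding M_def by (simp add: sum.reindex inj_on_def)
  define n\<delta> where "n\<delta> = real (card F) * \<delta>"
  have "length_defect M \<le> (\<Sum>U\<in>F. 2 * \<delta>)"
    unfolding length_defect_def sum_M
  proof (rule sum_mono)
    fix U assume "U \<in> F"
    then show "\<bar>Leb (fst (U, g U)) - Leb (snd (U, g U))\<bar> \<le> 2 * \<delta>"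
      using close[of U] unfolding Leb_def by auto
  qed
  also have "\<dots> = 2 * n\<delta>" by (simp add: n\<delta>_def)
  finally have LD: "length_defect M \<le> 2 * n\<delta>" .
  have snd_sum: "sum Leb F - length_defect M \<le> (\<Sum>U\<in>F. Leb (g U))"
    unfolding length_defect_def sum_M sum_subtractf[symmetric] by (intro sum_mono) simp
  have "\<delta> \<ge> 0" using norm by linarith
  then have "0 \<le> n\<delta>" by (simp add: n\<delta>_def)
  moreover have "sum Leb F \<le> Lb" using sum_Leb_le[OF IPb F] .
  moreover have "IPnorm \<beta> = Lb" by (rule IPnorm_eq[OF IPb])
  moreover have "diversity_defect \<alpha> \<beta> \<gamma> M \<le> \<delta>"
    using close \<open>\<delta> \<ge> 0\<close> matchingD(1)[OF M] by (auto simp: diversity_defect_le_iff M_def)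
  ultimately have "matching_distortion \<alpha> \<beta> \<gamma> M \<le> Lb - sum Leb F + 4 * n\<delta> + \<delta>"
    using LD snd_sum norm total \<open>\<delta> \<ge> 0\<close>
    unfolding matching_distortion_le_iff mass_defect_def sum_converse by (simp add: sum_M)
  moreover have "(4 * real (card F) + 1) * \<delta> = 4 * n\<delta> + \<delta>"
    by (simp add: n\<delta>_def algebra_simps)
  ultimately show ?thesis using d_alpha_le_matching_distortion[OF IPb M, of \<alpha>] by linarith
qed

lemma d_alpha_self:
  assumes IP: "is_IP L \<beta>"
  shows "d_alpha \<alpha> \<beta> \<beta> = 0"
proof -
  have small: "d_alpha \<alpha> \<beta> \<beta> < e" if "e > 0" for e
  proof -
    obtain F where F: "finite F" "F \<subseteq> \<beta>" "L - e < sum Leb F"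
      using sum_Leb_approx[OF IP \<open>e > 0\<close>] by blast
    have "d_alpha \<alpha> \<beta> \<beta> \<le> L - sum Leb F + (4 * real (card F) + 1) * 0"
      by (rule d_alpha_le_graph[OF IP F(1,2), where g = id]) (use F(2) in simp_all)
    with F(3) show ?thesis by simp
  qed
  show ?thesis
  proof (rule ccontr)
    assume "d_alpha \<alpha> \<beta> \<beta> \<noteq> 0"
    then have "0 < d_alpha \<alpha> \<beta> \<beta>" using d_alpha_nonneg[of \<alpha> \<beta> \<beta>] by linarith
    then show False using small by blast
  qed
qed

lemma matching_relcomp:
  assumes IPg: "is_IP Lg \<gamma>" and M1: "matching \<beta> \<gamma> M1" and M2: "matching \<gamma> \<delta> M2"
  shows "matching \<beta> \<delta> (M1 O M2)"
proof -
  have "(left_of (fst p) (fst q) \<and> left_of (snd p) (snd q)) \<or>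
        (left_of (fst q) (fst p) \<and> left_of (snd q) (snd p))"
    if p: "p \<in> M1 O M2" and q: "q \<in> M1 O M2" and "p \<noteq> q" for p q
  proof -
    obtain U V W where UVW: "p = (U, W)" "(U, V) \<in> M1" "(V, W) \<in> M2" using p by blast
    obtain U' V' W' where UVW': "q = (U', W')" "(U', V') \<in> M1" "(V', W') \<in> M2" using q by blast
    have "V \<noteq> V'"
    proof
      assume "V = V'"
      then have "U = U'" "W = W'"
        using inj_onD[OF matching_inj_snd[OF IPg M1] _ UVW(2) UVW'(2)]
          inj_onD[OF matching_inj_fst[OF IPg M2] _ UVW(3) UVW'(3)] by auto
      then show False using \<open>p \<noteq> q\<close> UVW(1) UVW'(1) by simp
    qed
    have V: "fst V < snd V" "fst V' < snd V'"
      using UVW(2) UVW'(2) matchingD(2)[OF M1] is_IP_blockD(2)[OF IPg] by auto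
    show ?thesis
      using matchingD(3)[OF M1 UVW(2) UVW'(2)] matchingD(3)[OF M2 UVW(3) UVW'(3)] \<open>V \<noteq> V'\<close>
        left_of_asym[OF V] left_of_asym[OF V(2,1)] UVW(1) UVW'(1) by auto
  qed
  moreover have "finite (M1 O M2)"
    using matchingD(1)[OF M1] matchingD(1)[OF M2] by (rule finite_relcomp)
  moreover have "M1 O M2 \<subseteq> \<beta> \<times> \<delta>" using matchingD(2)[OF M1] matchingD(2)[OF M2] by blast
  ultimately show ?thesis unfolding matching_def by blast
qed

definition chains :: "block_pairs \<Rightarrow> block_pairs \<Rightarrow> (((real \<times> real) \<times> (real \<times> real)) \<times> ((real \<times> real) \<times> (real \<times> real))) set" where
  "chains M1 M2 = {(p, q). p \<in> M1 \<and> q \<in> M2 \<and> snd p = fst q}"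

lemma relcomp_eq_image_chains: "M1 O M2 = (\<lambda>(p, q). (fst p, snd q)) ` chains M1 M2"
proof (intro equalityI subsetI)
  fix r assume "r \<in> M1 O M2"
  then obtain U V W where "r = (U, W)" "(U, V) \<in> M1" "(V, W) \<in> M2" by blast
  then have "((U, V), (V, W)) \<in> chains M1 M2" "r = (\<lambda>(p, q). (fst p, snd q)) ((U, V), (V, W))"
    unfolding chains_def by simp_all
  then show "r \<in> (\<lambda>(p, q). (fst p, snd q)) ` chains M1 M2" by blast
next
  fix r assume "r \<in> (\<lambda>(p, q). (fst p, snd q)) ` chains M1 M2"
  then obtain p q where "p \<in> M1" "q \<in> M2" "snd p = fst q" "r = (fst p, snd q)"
    unfolding chains_def by auto
  then show "r \<in> M1 O M2" by (metis prod.collapse relcompI)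
qed

lemma inj_on_chains:
  assumes IPb: "is_IP Lb \<beta>" and IPg: "is_IP Lg \<gamma>"
    and M1: "matching \<beta> \<gamma> M1" and M2: "matching \<gamma> \<delta> M2"
  shows "inj_on fst (chains M1 M2)" "inj_on snd (chains M1 M2)"
    and "inj_on (\<lambda>(p, q). (fst p, snd q)) (chains M1 M2)"
proof -
  have inj1: "inj_on fst M1" by (rule matching_inj_fst[OF IPb M1])
  have inj2: "inj_on snd M1" by (rule matching_inj_snd[OF IPg M1])
  have inj3: "inj_on fst M2" by (rule matching_inj_fst[OF IPg M2])
  have same_q: "q = q'" if "(p, q) \<in> chains M1 M2" "(p', q') \<in> chains M1 M2" "p = p'" for p q p' q'
    using that inj_onD[OF inj3] unfolding chains_def by auto
  show "inj_on fst (chains M1 M2)"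
    by (rule inj_onI) (metis prod.collapse same_q)
  show "inj_on snd (chains M1 M2)"
    by (rule inj_onI) (use inj_onD[OF inj2] in \<open>auto simp: chains_def\<close>)
  show "inj_on (\<lambda>(p, q). (fst p, snd q)) (chains M1 M2)"
  proof (rule inj_onI)
    fix x y assume xy: "x \<in> chains M1 M2" "y \<in> chains M1 M2"
      "(\<lambda>(p, q). (fst p, snd q)) x = (\<lambda>(p, q). (fst p, snd q)) y"
    obtain p q p' q' where x: "x = (p, q)" and y: "y = (p', q')" by (cases x, cases y)
    have "p \<in> M1" "p' \<in> M1" using xy(1,2) unfolding x y chains_def by auto
    then have "p = p'" using inj_onD[OF inj1, of p p'] xy(3) unfolding x y by simp
    then show "x = y" using same_q xy(1,2) unfolding x y by blast
  qed
qed

lemma sum_Leb_unchained_le: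
  assumes IPg: "is_IP Lg \<gamma>" and M1: "matching \<beta> \<gamma> M1" and M2: "matching \<gamma> \<delta> M2"
  shows "(\<Sum>p\<in>{p \<in> M1. snd p \<notin> fst ` M2}. Leb (snd p)) + (\<Sum>q\<in>M2. Leb (fst q)) \<le> Lg"
proof -
  define B where "B = {p \<in> M1. snd p \<notin> fst ` M2}"
  have "B \<subseteq> M1" "finite B" "finite M2" unfolding B_def using matchingD(1) M1 M2 by auto
  have "snd ` B \<inter> fst ` M2 = {}" unfolding B_def by blast
  moreover have "snd ` B \<subseteq> \<gamma>" "fst ` M2 \<subseteq> \<gamma>"
    using \<open>B \<subseteq> M1\<close> matchingD(2)[OF M1] matchingD(2)[OF M2] by auto
  ultimately have "sum Leb (snd ` B) + sum Leb (fst ` M2) \<le> Lg"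
    using \<open>finite B\<close> \<open>finite M2\<close> by (intro sum_Leb_disjoint_le[OF IPg]) auto
  then show ?thesis
    using sum.reindex[OF inj_on_subset[OF matching_inj_snd[OF IPg M1] \<open>B \<subseteq> M1\<close>], of Leb]
      sum.reindex[OF matching_inj_fst[OF IPg M2], of Leb]
    unfolding B_def by simp
qed

lemma mass_defect_relcomp:
  assumes IPb: "is_IP Lb \<beta>" and IPg: "is_IP Lg \<gamma>"
    and M1: "matching \<beta> \<gamma> M1" and M2: "matching \<gamma> \<delta> M2"
  shows "mass_defect \<beta> (M1 O M2) \<le> mass_defect \<beta> M1 + mass_defect \<gamma> M2"
proof -
  define C where "C = chains M1 M2"
  define A where "A = fst ` C"
  define B where "B = {p \<in> M1. snd p \<notin> fst ` M2}"
  let ?d = "\<lambda>p. \<bar>Leb (fst p) - Leb (snd p)\<bar>"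
  have fin: "finite M1" "finite M2" using matchingD(1) M1 M2 by blast+
  note inj_C = inj_on_chains[OF IPb IPg M1 M2, folded C_def]
  note relcomp_eq = relcomp_eq_image_chains[of M1 M2, folded C_def]
  have "length_defect (M1 O M2) \<le> (\<Sum>(p, q)\<in>C. ?d p + ?d q)"
    unfolding length_defect_def relcomp_eq sum.reindex[OF inj_C(3)]
    by (intro sum_mono) (auto simp: C_def chains_def)
  also have "\<dots> = length_defect A + length_defect (snd ` C)"
    unfolding length_defect_def A_def sum.reindex[OF inj_C(1)] sum.reindex[OF inj_C(2)]
    by (simp add: sum.distrib split_def)
  also have "length_defect (snd ` C) \<le> length_defect M2"
    unfolding length_defect_def using fin(2) by (intro sum_mono2) (auto simp: C_def chains_def)
  finally have LD: "length_defect (M1 O M2) \<le> length_defect A + length_defect M2" by simp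
  have sum_fst: "(\<Sum>p\<in>M1 O M2. Leb (fst p)) = (\<Sum>p\<in>A. Leb (fst p))"
    unfolding relcomp_eq A_def sum.reindex[OF inj_C(3)] sum.reindex[OF inj_C(1)]
    by (simp add: split_def)
  have "A \<subseteq> M1" unfolding A_def C_def chains_def by auto
  moreover have "B = M1 - A" unfolding A_def B_def C_def chains_def by force
  ultimately have split_M1: "length_defect M1 = length_defect A + length_defect B"
    "(\<Sum>p\<in>M1. Leb (fst p)) = (\<Sum>p\<in>A. Leb (fst p)) + (\<Sum>p\<in>B. Leb (fst p))"
    unfolding length_defect_def \<open>B = M1 - A\<close>
    using sum.subset_diff[OF \<open>A \<subseteq> M1\<close> fin(1), of ?d] sum.subset_diff[OF \<open>A \<subseteq> M1\<close> fin(1), of "\<lambda>p. Leb (fst p)"]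
    by linarith+
  have "(\<Sum>p\<in>B. Leb (fst p)) \<le> length_defect B + (\<Sum>p\<in>B. Leb (snd p))"
    unfolding length_defect_def sum.distrib[symmetric] by (intro sum_mono) linarith
  then show ?thesis
    using LD sum_fst split_M1 sum_Leb_unchained_le[OF IPg M1 M2] IPnorm_eq[OF IPg]
    unfolding mass_defect_def B_def by linarith
qed

lemma diversity_defect_relcomp:
  assumes "finite M1" "finite M2"
  shows "diversity_defect \<alpha> \<beta> \<delta> (M1 O M2) \<le> diversity_defect \<alpha> \<beta> \<gamma> M1 + diversity_defect \<alpha> \<gamma> \<delta> M2"
proof -
  have "\<bar>block_div \<alpha> \<beta> U - block_div \<alpha> \<delta> W\<bar> \<le> diversity_defect \<alpha> \<beta> \<gamma> M1 + diversity_defect \<alpha> \<gamma> \<delta> M2"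
    if "(U, V) \<in> M1" "(V, W) \<in> M2" for U V W
    using diversity_defect_ge[OF assms(1) that(1), of \<alpha> \<beta> \<gamma>] diversity_defect_ge[OF assms(2) that(2), of \<alpha> \<gamma> \<delta>]
    by simp
  moreover have "0 \<le> diversity_defect \<alpha> \<beta> \<gamma> M1 + diversity_defect \<alpha> \<gamma> \<delta> M2"
    using diversity_defect_le_iff[OF assms(1), of \<alpha> \<beta> \<gamma>] diversity_defect_le_iff[OF assms(2), of \<alpha> \<gamma> \<delta>]
    by (meson add_nonneg_nonneg not_le order_refl)
  ultimately show ?thesis
    using finite_relcomp[OF assms] by (auto simp: diversity_defect_le_iff)
qed

lemma matching_distortion_relcomp:
  assumes IPb: "is_IP Lb \<beta>" and IPg: "is_IP Lg \<gamma>" and IPd: "is_IP Ld \<delta>"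
    and M1: "matching \<beta> \<gamma> M1" and M2: "matching \<gamma> \<delta> M2"
  shows "matching_distortion \<alpha> \<beta> \<delta> (M1 O M2) \<le> matching_distortion \<alpha> \<beta> \<gamma> M1 + matching_distortion \<alpha> \<gamma> \<delta> M2"
proof -
  have "mass_defect \<beta> (M1 O M2) \<le> mass_defect \<beta> M1 + mass_defect \<gamma> M2"
    by (rule mass_defect_relcomp[OF IPb IPg M1 M2])
  moreover have "mass_defect \<delta> (converse (M1 O M2)) \<le> mass_defect \<delta> (converse M2) + mass_defect \<gamma> (converse M1)"
    unfolding converse_relcomp
    by (rule mass_defect_relcomp[OF IPd IPg matching_converse[OF M2] matching_converse[OF M1]])
  moreover have "diversity_defect \<alpha> \<beta> \<delta> (M1 O M2) \<le> diversity_defect \<alpha> \<beta> \<gamma> M1 + diversity_defect \<alpha> \<gamma> \<delta> M2"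
    using matchingD(1) M1 M2 by (intro diversity_defect_relcomp)
  moreover have "\<bar>total_div \<alpha> \<beta> - total_div \<alpha> \<delta>\<bar> \<le> \<bar>total_div \<alpha> \<beta> - total_div \<alpha> \<gamma>\<bar> + \<bar>total_div \<alpha> \<gamma> - total_div \<alpha> \<delta>\<bar>"
    by linarith
  ultimately show ?thesis
    using matching_distortion_ge[where \<alpha>=\<alpha> and \<beta>=\<beta> and \<gamma>=\<gamma> and M=M1]
      matching_distortion_ge[where \<alpha>=\<alpha> and \<beta>=\<gamma> and \<gamma>=\<delta> and M=M2]
    unfolding matching_distortion_le_iff by linarith
qed

lemma d_alpha_triangle:
  assumes IPb: "is_IP Lb \<beta>" and IPg: "is_IP Lg \<gamma>" and IPd: "is_IP Ld \<delta>"
  shows "d_alpha \<alpha> \<beta> \<delta> \<le> d_alpha \<alpha> \<beta> \<gamma> + d_alpha \<alpha> \<gamma> \<delta>"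
proof (rule field_le_epsilon)
  fix e :: real assume "0 < e"
  obtain M1 where M1: "matching \<beta> \<gamma> M1" "matching_distortion \<alpha> \<beta> \<gamma> M1 < d_alpha \<alpha> \<beta> \<gamma> + e/2"
    using d_alpha_less_imp_matching[OF IPb, of \<alpha> \<gamma> "d_alpha \<alpha> \<beta> \<gamma> + e/2"] \<open>0 < e\<close> by auto
  obtain M2 where M2: "matching \<gamma> \<delta> M2" "matching_distortion \<alpha> \<gamma> \<delta> M2 < d_alpha \<alpha> \<gamma> \<delta> + e/2"
    using d_alpha_less_imp_matching[OF IPg, of \<alpha> \<delta> "d_alpha \<alpha> \<gamma> \<delta> + e/2"] \<open>0 < e\<close> by auto
  have "d_alpha \<alpha> \<beta> \<delta> \<le> matching_distortion \<alpha> \<beta> \<delta> (M1 O M2)"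
    by (rule d_alpha_le_matching_distortion[OF IPb matching_relcomp[OF IPg M1(1) M2(1)]])
  also have "\<dots> \<le> matching_distortion \<alpha> \<beta> \<gamma> M1 + matching_distortion \<alpha> \<gamma> \<delta> M2"
    by (rule matching_distortion_relcomp[OF IPb IPg IPd M1(1) M2(1)])
  finally show "d_alpha \<alpha> \<beta> \<delta> \<le> d_alpha \<alpha> \<beta> \<gamma> + d_alpha \<alpha> \<gamma> \<delta> + e"
    using M1(2) M2(2) by linarith
qed

lemma length_defect_nonneg: "0 \<le> length_defect M"
  unfolding length_defect_def by (intro sum_nonneg) simp

lemma sum_Leb_unmatched_le:
  assumes IP: "is_IP L \<beta>" and M: "matching \<beta> \<gamma> M"
    and F: "finite F" "F \<subseteq> \<beta>" "F \<inter> fst ` M = {}"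
  shows "sum Leb F + (\<Sum>p\<in>M. Leb (fst p)) \<le> L"
proof -
  have "(\<Sum>p\<in>M. Leb (fst p)) = sum Leb (fst ` M)"
    using sum.reindex[OF matching_inj_fst[OF IP M], of Leb] by simp
  moreover have "sum Leb F + sum Leb (fst ` M) \<le> L"
    using matchingD(1,2)[OF M] F by (intro sum_Leb_disjoint_le[OF IP]) auto
  ultimately show ?thesis by simp
qed

lemma length_defect_le_mass_defect:
  assumes "is_IP L \<beta>" "matching \<beta> \<gamma> M"
  shows "length_defect M \<le> mass_defect \<beta> M"
  using sum_Leb_unmatched_le[OF assms, of "{}"] IPnorm_eq[OF assms(1)]
  unfolding mass_defect_def by simp

lemma Leb_le_mass_defect_if_unmatched:
  assumes "is_IP L \<beta>" "matching \<beta> \<gamma> M" "U \<in> \<beta>" "U \<notin> fst ` M"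
  shows "Leb U \<le> mass_defect \<beta> M"
  using sum_Leb_unmatched_le[OF assms(1,2), of "{U}"] assms(3,4) length_defect_nonneg[of M]
    IPnorm_eq[OF assms(1)]
  unfolding mass_defect_def by simp

lemma sum_Leb_snd_left_of_le:
  assumes IPb: "is_IP Lb \<beta>" and IPg: "is_IP Lg \<gamma>" and M: "matching \<beta> \<gamma> M"
    and UV: "(U, V) \<in> M"
  shows "(\<Sum>p\<in>{p \<in> M. left_of (fst p) U}. Leb (snd p)) \<le> fst V"
proof -
  define Ml where "Ml = {p \<in> M. left_of (fst p) U}"
  have "Ml \<subseteq> M" "finite Ml" unfolding Ml_def using matchingD(1)[OF M] by auto
  have U: "fst U < snd U" and V: "0 \<le> fst V"
    using UV matchingD(2)[OF M] is_IP_blockD[OF IPb, of U] is_IP_blockD[OF IPg, of V] by auto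
  have "left_of (snd p) V" if "p \<in> Ml" for p
  proof -
    have p: "p \<in> M" "left_of (fst p) U" "fst p \<in> \<beta>"
      using that matchingD(2)[OF M] unfolding Ml_def by auto
    then have "p \<noteq> (U, V)" using not_left_of_self[OF U] by auto
    moreover have "\<not> left_of U (fst p)"
      using left_of_asym[OF is_IP_blockD(2)[OF IPb p(3)] U] p(2) by blast
    ultimately show ?thesis using matchingD(3)[OF M p(1) UV] by auto
  qed
  then have "sum Leb (snd ` Ml) \<le> fst V - 0"
    using \<open>Ml \<subseteq> M\<close> \<open>finite Ml\<close> matchingD(2)[OF M] is_IP_blockD(1)[OF IPg] V
    by (intro sum_Leb_le_interval[OF IPg]) (auto simp: left_of_def)
  moreover have "sum Leb (snd ` Ml) = (\<Sum>p\<in>Ml. Leb (snd p))"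
    using sum.reindex[OF inj_on_subset[OF matching_inj_snd[OF IPg M] \<open>Ml \<subseteq> M\<close>], of Leb] by simp
  ultimately show ?thesis unfolding Ml_def by simp
qed

lemma sum_Leb_matched_left_of_le:
  assumes IPb: "is_IP Lb \<beta>" and IPg: "is_IP Lg \<gamma>" and M: "matching \<beta> \<gamma> M"
    and UV: "(U, V) \<in> M" and F: "finite F" "F \<subseteq> {W \<in> \<beta>. left_of W U}"
  shows "sum Leb (F \<inter> fst ` M) \<le> length_defect M + fst V"
proof -
  define Ml where "Ml = {p \<in> M. left_of (fst p) U}"
  have "Ml \<subseteq> M" "finite Ml" unfolding Ml_def using matchingD(1)[OF M] by auto
  have "F \<inter> fst ` M \<subseteq> fst ` Ml"
  proof
    fix W assume "W \<in> F \<inter> fst ` M"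
    then obtain p where p: "p \<in> M" "W = fst p" "W \<in> F" by blast
    then have "left_of (fst p) U" using F(2) by blast
    with p show "W \<in> fst ` Ml" unfolding Ml_def by blast
  qed
  moreover have "\<forall>W\<in>fst ` Ml. 0 \<le> Leb W"
  proof
    fix W assume "W \<in> fst ` Ml"
    then have "W \<in> \<beta>" using \<open>Ml \<subseteq> M\<close> matchingD(2)[OF M] by auto
    then show "0 \<le> Leb W" using Leb_pos[OF IPb] by (simp add: less_imp_le)
  qed
  ultimately have "sum Leb (F \<inter> fst ` M) \<le> sum Leb (fst ` Ml)"
    using \<open>finite Ml\<close> by (intro sum_mono2) auto
  also have "\<dots> = (\<Sum>p\<in>Ml. Leb (fst p))"
    using sum.reindex[OF inj_on_subset[OF matching_inj_fst[OF IPb M] \<open>Ml \<subseteq> M\<close>], of Leb] by simp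
  also have "\<dots> \<le> (\<Sum>p\<in>Ml. \<bar>Leb (fst p) - Leb (snd p)\<bar> + Leb (snd p))"
    by (intro sum_mono) linarith
  also have "\<dots> \<le> length_defect M + (\<Sum>p\<in>Ml. Leb (snd p))"
    unfolding sum.distrib length_defect_def
    using \<open>Ml \<subseteq> M\<close> matchingD(1)[OF M] by (simp add: sum_mono2)
  also have "(\<Sum>p\<in>Ml. Leb (snd p)) \<le> fst V"
    unfolding Ml_def by (rule sum_Leb_snd_left_of_le[OF IPb IPg M UV])
  finally show ?thesis by simp
qed

lemma fst_le_fst_add_mass_defect:
  assumes IPb: "is_IP Lb \<beta>" and IPg: "is_IP Lg \<gamma>" and M: "matching \<beta> \<gamma> M"
    and UV: "(U, V) \<in> M"
  shows "fst U \<le> fst V + mass_defect \<beta> M"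
proof (rule field_le_epsilon)
  fix \<eta> :: real assume "0 < \<eta>"
  have "U \<in> \<beta>" using UV matchingD(2)[OF M] by auto
  obtain F where F: "finite F" "F \<subseteq> {W \<in> \<beta>. left_of W U}" "fst U - \<eta> < sum Leb F"
    using sum_Leb_left_of_approx[OF IPb \<open>U \<in> \<beta>\<close> \<open>0 < \<eta>\<close>] by blast
  have "F - F \<inter> fst ` M = F - fst ` M" by blast
  then have "sum Leb F = sum Leb (F - fst ` M) + sum Leb (F \<inter> fst ` M)"
    using sum.subset_diff[of "F \<inter> fst ` M" F Leb] F(1) by simp
  moreover have "sum Leb (F - fst ` M) + (\<Sum>p\<in>M. Leb (fst p)) \<le> Lb"
    using F by (intro sum_Leb_unmatched_le[OF IPb M]) auto
  moreover have "sum Leb (F \<inter> fst ` M) \<le> length_defect M + fst V"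
    by (rule sum_Leb_matched_left_of_le[OF IPb IPg M UV F(1,2)])
  ultimately show "fst U \<le> fst V + mass_defect \<beta> M + \<eta>"
    using F(3) IPnorm_eq[OF IPb] unfolding mass_defect_def by linarith
qed

lemma d_alpha_less_imp_near_block:
  assumes IPb: "is_IP Lb \<beta>" and IPg: "is_IP Lg \<gamma>" and U: "U \<in> \<beta>"
    and d: "d_alpha \<alpha> \<beta> \<gamma> < e" and e: "e \<le> Leb U"
  obtains V where "V \<in> \<gamma>" "\<bar>fst V - fst U\<bar> < e" "\<bar>Leb V - Leb U\<bar> < e"
proof -
  obtain M where M: "matching \<beta> \<gamma> M" "matching_distortion \<alpha> \<beta> \<gamma> M < e"
    using d_alpha_less_imp_matching[OF IPb d] by blast
  have small: "mass_defect \<beta> M < e" "mass_defect \<gamma> (converse M) < e"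
    using M(2) unfolding matching_distortion_less_iff by auto
  have "U \<in> fst ` M"
    using Leb_le_mass_defect_if_unmatched[OF IPb M(1) U] small(1) e by fastforce
  then obtain V where UV: "(U, V) \<in> M" by force
  have "V \<in> \<gamma>" using UV matchingD(2)[OF M(1)] by auto
  moreover have "fst U \<le> fst V + mass_defect \<beta> M"
    by (rule fst_le_fst_add_mass_defect[OF IPb IPg M(1) UV])
  moreover have "fst V \<le> fst U + mass_defect \<gamma> (converse M)"
    using UV by (intro fst_le_fst_add_mass_defect[OF IPg IPb matching_converse[OF M(1)]]) simp
  moreover have "\<bar>Leb V - Leb U\<bar> \<le> mass_defect \<beta> M"
    using member_le_sum[OF UV, of "\<lambda>p. \<bar>Leb (fst p) - Leb (snd p)\<bar>"] matchingD(1)[OF M(1)]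
      length_defect_le_mass_defect[OF IPb M(1)]
    unfolding length_defect_def by simp
  ultimately show thesis using that small by fastforce
qed

lemma d_alpha_eq_0_imp_subset:
  assumes IPb: "is_IP Lb \<beta>" and IPg: "is_IP Lg \<gamma>" and d0: "d_alpha \<alpha> \<beta> \<gamma> = 0"
  shows "\<beta> \<subseteq> \<gamma>"
proof
  fix U assume U: "U \<in> \<beta>"
  define dist_U where "dist_U V = \<bar>fst V - fst U\<bar> + \<bar>snd V - snd U\<bar>" for V
  define D where "D = dist_U ` ({V \<in> \<gamma>. Leb V > Leb U / 2} - {U})"
  have "finite D"
    unfolding D_def using finite_long_blocks[OF IPg, of "Leb U / 2"] Leb_pos[OF IPb U] by simp
  have D_pos: "x > 0" if "x \<in> D" for x
    using that unfolding D_def dist_U_def by (auto simp: prod_eq_iff)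
  define e where "e = Min (insert (Leb U / 2) D) / 3"
  have "e > 0" unfolding e_def using \<open>finite D\<close> D_pos Leb_pos[OF IPb U] by simp
  have "Min (insert (Leb U / 2) D) \<le> Leb U / 2"
    by (rule Min_le) (use \<open>finite D\<close> in auto)
  moreover have "Min (insert (Leb U / 2) D) \<le> x" if "x \<in> D" for x
    by (rule Min_le) (use \<open>finite D\<close> that in auto)
  ultimately have e_le: "3 * e \<le> Leb U / 2" "\<And>x. x \<in> D \<Longrightarrow> 3 * e \<le> x"
    unfolding e_def by auto
  obtain V where V: "V \<in> \<gamma>" "\<bar>fst V - fst U\<bar> < e" "\<bar>Leb V - Leb U\<bar> < e"
    using d_alpha_less_imp_near_block[OF IPb IPg U, of \<alpha> e] d0 \<open>e > 0\<close> e_le(1) by auto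
  have "dist_U V < 3 * e" using V(2,3) unfolding dist_U_def Leb_def by linarith
  moreover have "Leb V > Leb U / 2" using V(3) e_le(1) by linarith
  ultimately have "V = U" using e_le(2) V(1) unfolding D_def by fastforce
  then show "U \<in> \<gamma>" using V(1) by simp
qed

lemma d_alpha_eq_0_imp_eq:
  assumes "is_IP Lb \<beta>" "is_IP Lg \<gamma>" "d_alpha \<alpha> \<beta> \<gamma> = 0"
  shows "\<beta> = \<gamma>"
  using d_alpha_eq_0_imp_subset[OF assms] d_alpha_eq_0_imp_subset[OF assms(2,1)]
    assms(3) d_alpha_commute[of \<alpha> \<beta> \<gamma>] by auto

lemma Metric_space_d_alpha: "Metric_space IP (d_alpha \<alpha>)"
proof
  show "0 \<le> d_alpha \<alpha> x y" for x y by (rule d_alpha_nonneg)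
  show "d_alpha \<alpha> x y = d_alpha \<alpha> y x" for x y by (rule d_alpha_commute)
  show "d_alpha \<alpha> x y = 0 \<longleftrightarrow> x = y" if "x \<in> IP" "y \<in> IP" for x y
    using d_alpha_eq_0_imp_eq d_alpha_self is_IP_IPnorm that by metis
  show "d_alpha \<alpha> x z \<le> d_alpha \<alpha> x y + d_alpha \<alpha> y z" if "x \<in> IP" "y \<in> IP" "z \<in> IP" for x y z
    using d_alpha_triangle is_IP_IPnorm that by blast
qed

section \<open>Separability\<close>

text \<open>The value (0, 0) is junk: the empty partition has no blocks.\<close>

definition enum_block :: "ipart \<Rightarrow> nat \<Rightarrow> real \<times> real" where
  "enum_block \<beta> k = (if \<beta> = {} then (0, 0) else from_nat_into \<beta> k)"

definition features :: "real \<Rightarrow> ipart \<Rightarrow> nat \<Rightarrow> real \<times> real \<times> real \<times> real \<times> real" where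
  "features \<alpha> \<beta> k = (IPnorm \<beta>, total_div \<alpha> \<beta>,
     fst (enum_block \<beta> k), snd (enum_block \<beta> k), block_div \<alpha> \<beta> (enum_block \<beta> k))"

lemma enum_block_in: "\<beta> \<noteq> {} \<Longrightarrow> enum_block \<beta> k \<in> \<beta>"
  unfolding enum_block_def by (simp add: from_nat_into)

lemma enum_block_surj:
  assumes "is_IP L \<beta>" "U \<in> \<beta>"
  shows "\<exists>k. enum_block \<beta> k = U"
  using from_nat_into_surj[OF countable_blocks[OF assms(1)] assms(2)] assms(2)
  unfolding enum_block_def by auto

lemma dist_Pair_lessD: "dist (a, r) (b, s) < \<delta> \<Longrightarrow> dist a b < \<delta> \<and> dist r s < \<delta>"
  using dist_fst_le[of "(a, r)" "(b, s)"] dist_snd_le[of "(a, r)" "(b, s)"] by simp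

lemma features_close:
  assumes "dist (features \<alpha> \<beta> k) (features \<alpha> \<gamma> k) < \<delta>"
  shows "\<bar>IPnorm \<beta> - IPnorm \<gamma>\<bar> < \<delta>" "\<bar>total_div \<alpha> \<beta> - total_div \<alpha> \<gamma>\<bar> < \<delta>"
    "\<bar>fst (enum_block \<beta> k) - fst (enum_block \<gamma> k)\<bar> < \<delta>"
    "\<bar>snd (enum_block \<beta> k) - snd (enum_block \<gamma> k)\<bar> < \<delta>"
    "\<bar>block_div \<alpha> \<beta> (enum_block \<beta> k) - block_div \<alpha> \<gamma> (enum_block \<gamma> k)\<bar> < \<delta>"
  using assms unfolding features_def by (auto dest!: dist_Pair_lessD simp: dist_real_def)

lemma transfer_left_of:
  assumes IP: "is_IP L \<gamma>" and V: "V \<in> \<gamma>" "V' \<in> \<gamma>"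
    and long: "2 * \<delta> \<le> Leb U" "2 * \<delta> \<le> Leb U'" and "left_of U U'"
    and close: "\<bar>fst U - fst V\<bar> < \<delta>" "\<bar>snd U - snd V\<bar> < \<delta>" "\<bar>fst U' - fst V'\<bar> < \<delta>" "\<bar>snd U' - snd V'\<bar> < \<delta>"
  shows "left_of V V'"
proof -
  have "V \<noteq> V'"
    using close long \<open>left_of U U'\<close> unfolding left_of_def Leb_def by force
  then have "left_of V V' \<or> left_of V' V" by (rule is_IP_left_of_cases[OF IP V])
  moreover have "\<not> left_of V' V"
    using close long \<open>left_of U U'\<close> unfolding left_of_def Leb_def by linarith
  ultimately show ?thesis by blast
qed

lemma d_alpha_le_if_blocks_close:
  assumes IPb: "is_IP Lb \<beta>" and IPg: "is_IP Lg \<gamma>" and F: "finite F" "F \<subseteq> \<beta>"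
    and g: "g ` F \<subseteq> \<gamma>" and long: "\<And>U. U \<in> F \<Longrightarrow> 2 * \<delta> \<le> Leb U"
    and close: "\<And>U. U \<in> F \<Longrightarrow> \<bar>fst U - fst (g U)\<bar> < \<delta> \<and> \<bar>snd U - snd (g U)\<bar> < \<delta> \<and>
                  \<bar>block_div \<alpha> \<beta> U - block_div \<alpha> \<gamma> (g U)\<bar> < \<delta>"
    and norm: "\<bar>IPnorm \<beta> - IPnorm \<gamma>\<bar> \<le> \<delta>" and total: "\<bar>total_div \<alpha> \<beta> - total_div \<alpha> \<gamma>\<bar> \<le> \<delta>"
  shows "d_alpha \<alpha> \<beta> \<gamma> \<le> Lb - sum Leb F + (4 * real (card F) + 1) * \<delta>"
proof (rule d_alpha_le_graph[OF IPb F g _ _ norm total])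
  fix U U' assume U: "U \<in> F" "U' \<in> F" "left_of U U'"
  have "g U \<in> \<gamma>" "g U' \<in> \<gamma>" using U(1,2) g by auto
  with U show "left_of (g U) (g U')"
    using transfer_left_of[OF IPg _ _ long[OF U(1)] long[OF U(2)]] close[OF U(1)] close[OF U(2)] by blast
next
  fix U assume "U \<in> F"
  then show "\<bar>fst U - fst (g U)\<bar> \<le> \<delta> \<and> \<bar>snd U - snd (g U)\<bar> \<le> \<delta> \<and>
      \<bar>block_div \<alpha> \<beta> U - block_div \<alpha> \<gamma> (g U)\<bar> \<le> \<delta>"
    using close[of U] by linarith
qed

lemma d_alpha_le_if_features_close:
  assumes IPb: "is_IP Lb \<beta>" and IPg: "is_IP Lg \<gamma>" and F: "finite F" "F \<subseteq> \<beta>"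
    and idx: "\<And>U. U \<in> F \<Longrightarrow> enum_block \<beta> (idx U) = U"
    and long: "\<And>U. U \<in> F \<Longrightarrow> 2 * \<delta> \<le> Leb U"
    and near: "\<forall>k\<in>insert 0 (idx ` F). dist (features \<alpha> \<beta> k) (features \<alpha> \<gamma> k) < \<delta>"
  shows "d_alpha \<alpha> \<beta> \<gamma> \<le> Lb - sum Leb F + (4 * real (card F) + 1) * \<delta>"
proof -
  define g where "g U = enum_block \<gamma> (idx U)" for U
  have close: "\<bar>fst U - fst (g U)\<bar> < \<delta> \<and> \<bar>snd U - snd (g U)\<bar> < \<delta> \<and>
      \<bar>block_div \<alpha> \<beta> U - block_div \<alpha> \<gamma> (g U)\<bar> < \<delta>" if "U \<in> F" for U
    using features_close(3-5)[of \<alpha> \<beta> "idx U" \<gamma> \<delta>] near idx[OF that] that unfolding g_def by auto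
  have "g ` F \<subseteq> \<gamma>"
  proof (cases "\<gamma> = {}")
    case True
    have "U \<notin> F" for U
      using close[of U] long[of U] True unfolding g_def enum_block_def Leb_def by auto
    then show ?thesis by blast
  next
    case False
    then show ?thesis unfolding g_def using enum_block_in by blast
  qed
  moreover have "\<bar>IPnorm \<beta> - IPnorm \<gamma>\<bar> \<le> \<delta>" "\<bar>total_div \<alpha> \<beta> - total_div \<alpha> \<gamma>\<bar> \<le> \<delta>"
    using features_close(1,2)[of \<alpha> \<beta> 0 \<gamma> \<delta>] near by auto
  ultimately show ?thesis
    using d_alpha_le_if_blocks_close[OF IPb IPg F _ long close] by blast
qed

lemma d_alpha_less_if_features_close:
  assumes IPb: "is_IP L \<beta>" and "\<epsilon> > 0"
  obtains \<delta> K where "\<delta> > 0" "finite K"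
    "\<And>\<gamma> Lg. is_IP Lg \<gamma> \<Longrightarrow> (\<forall>k\<in>K. dist (features \<alpha> \<beta> k) (features \<alpha> \<gamma> k) < \<delta>) \<Longrightarrow>
       d_alpha \<alpha> \<beta> \<gamma> < \<epsilon>"
proof -
  obtain F where F: "finite F" "F \<subseteq> \<beta>" "L - \<epsilon>/2 < sum Leb F"
    using sum_Leb_approx[OF IPb, of "\<epsilon>/2"] \<open>\<epsilon> > 0\<close> by auto
  obtain idx where idx: "\<And>U. U \<in> F \<Longrightarrow> enum_block \<beta> (idx U) = U"
    using enum_block_surj[OF IPb] F(2) by (metis subsetD)
  define l where "l = Min (insert 1 (Leb ` F))"
  have "0 < l" unfolding l_def using F(1,2) Leb_pos[OF IPb] by (subst Min_gr_iff) auto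
  have l_le: "l \<le> Leb U" if "U \<in> F" for U unfolding l_def using F(1) that by (intro Min_le) auto
  define \<delta> where "\<delta> = min (l/2) (\<epsilon> / (2 * (4 * real (card F) + 2)))"
  have "0 < \<delta>" unfolding \<delta>_def using \<open>0 < l\<close> \<open>\<epsilon> > 0\<close> by auto
  have long: "2 * \<delta> \<le> Leb U" if "U \<in> F" for U
    using l_le[OF that] unfolding \<delta>_def by linarith
  have "(4 * real (card F) + 2) * \<delta> \<le> (4 * real (card F) + 2) * (\<epsilon> / (2 * (4 * real (card F) + 2)))"
    unfolding \<delta>_def by (intro mult_left_mono) auto
  also have "\<dots> = \<epsilon> / 2" by (simp add: field_simps)
  finally have "(4 * real (card F) + 2) * \<delta> \<le> \<epsilon> / 2" .
  then have "d_alpha \<alpha> \<beta> \<gamma> < \<epsilon>"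
    if "is_IP Lg \<gamma>" "\<forall>k\<in>insert 0 (idx ` F). dist (features \<alpha> \<beta> k) (features \<alpha> \<gamma> k) < \<delta>" for \<gamma> Lg
    using d_alpha_le_if_features_close[OF IPb that(1) F(1,2) idx long that(2)] F(3) \<open>0 < \<delta>\<close>
    by (simp add: algebra_simps)
  then show thesis using that[of \<delta> "insert 0 (idx ` F)"] \<open>0 < \<delta>\<close> F(1) by blast
qed

lemma d_alpha_less_if_features_near:
  assumes "\<beta> \<in> IP" "\<epsilon> > 0"
  shows "\<exists>\<eta>>0. \<forall>\<gamma>\<in>IP. dist (features \<alpha> \<beta>) (features \<alpha> \<gamma>) < \<eta> \<longrightarrow> d_alpha \<alpha> \<beta> \<gamma> < \<epsilon>"
proof -
  obtain \<delta> K where \<delta>K: "\<delta> > 0" "finite K"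
    "\<And>\<gamma> Lg. is_IP Lg \<gamma> \<Longrightarrow> (\<forall>k\<in>K. dist (features \<alpha> \<beta> k) (features \<alpha> \<gamma> k) < \<delta>) \<Longrightarrow>
       d_alpha \<alpha> \<beta> \<gamma> < \<epsilon>"
    using d_alpha_less_if_features_close[OF is_IP_IPnorm[OF assms(1)] assms(2)] by metis
  define \<eta> where "\<eta> = Min (insert 1 ((\<lambda>k. (1/2) ^ to_nat k * min \<delta> 1) ` K))"
  have "\<eta> > 0" unfolding \<eta>_def using \<delta>K(1,2) by (subst Min_gr_iff) auto
  moreover have "d_alpha \<alpha> \<beta> \<gamma> < \<epsilon>"
    if "\<gamma> \<in> IP" "dist (features \<alpha> \<beta>) (features \<alpha> \<gamma>) < \<eta>" for \<gamma>
  proof (rule \<delta>K(3)[OF is_IP_IPnorm[OF \<open>\<gamma> \<in> IP\<close>]], intro ballI)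
    fix k assume "k \<in> K"
    then have "\<eta> \<le> (1/2) ^ to_nat k * min \<delta> 1" unfolding \<eta>_def using \<delta>K(2) by (intro Min_le) auto
    then have "(1/2) ^ to_nat k * min (dist (features \<alpha> \<beta> k) (features \<alpha> \<gamma> k)) 1 < (1/2) ^ to_nat k * min \<delta> 1"
      using dist_fun_ge_coordinate[of k "features \<alpha> \<beta>" "features \<alpha> \<gamma>"] that(2) by linarith
    then show "dist (features \<alpha> \<beta> k) (features \<alpha> \<gamma> k) < \<delta>"
      by (auto simp: min_def split: if_splits)
  qed
  ultimately show ?thesis by blast
qed

theorem corollary3p7:
  fixes \<alpha> :: real
  assumes "0 < \<alpha>" and "\<alpha> < 1"
  shows "\<exists>d. Metric_space (I_alpha \<alpha>) d \<and>
             Metric_space.mtopology (I_alpha \<alpha>) d = Metric_space.mtopology (I_alpha \<alpha>) (d_alpha \<alpha>) \<and>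
             (\<exists>(K :: (nat \<Rightarrow> real) set) dK f.
                 Metric_space K dK \<and> compact_space (Metric_space.mtopology K dK) \<and>
                 f ` I_alpha \<alpha> \<subseteq> K \<and>
                 (\<forall>x\<in>I_alpha \<alpha>. \<forall>y\<in>I_alpha \<alpha>. dK (f x) (f y) = d x y))"
proof -
  have "I_alpha \<alpha> \<subseteq> IP" unfolding I_alpha_def by blast
  then have "Metric_space (I_alpha \<alpha>) (d_alpha \<alpha>)"
    by (rule Metric_space.subspace[OF Metric_space_d_alpha])
  moreover obtain D where "countable D" "D \<subseteq> I_alpha \<alpha>"
    "\<forall>x\<in>I_alpha \<alpha>. \<forall>\<epsilon>>0. \<exists>y\<in>D. d_alpha \<alpha> x y < \<epsilon>"
    using countable_dense_subset_if_feature_map[of "I_alpha \<alpha>" "features \<alpha>" "d_alpha \<alpha>"]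
      d_alpha_less_if_features_near \<open>I_alpha \<alpha> \<subseteq> IP\<close> by (metis subsetD)
  ultimately show ?thesis
    by (intro separable_metric_embeds_in_Hilbert_cube) auto
qed

end
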